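(* In the setting of the context, suppose that $\rho:=\rho_{\mathcal A_\nu,\mathcal S_{\log},\pi_{\log}}$ is proper, convex, and lower semicontinuous with respect to $\tau_{\log}$. Then for all $X\in\mathcal C$, $$\eta_{\mathfrak R}(X)=\sup_{\varphi\in\mathcal D_{\ge1}}\exp\Big(\varphi(X)-\sup_{Y\in\mathcal B_{\tilde\rho}}\varphi(Y)-\sup_{Z\in\mathcal S}\big(\varphi(Z)-\log\pi(Z)\big)\Big),$$ where $\mathcal D_{\ge1}$ is the set of all log-linear $\tau$-continuous $\varphi\colon\mathcal C\to\mathbb R$ such that $\varphi(X)\ge0$ for all $X\in\mathcal C\cap\mathcal K$ with $X\ge1$ a.s.
   Context: Probability space $(\Omega,\mathcal F,P)$; $L^0_{++}$ = a.s. strictly positive random variables; $L^\infty_{++}=L^\infty\cap L^0_{++}$; $\frac{\mathcal A}{\mathcal D}=\{AD^{-1}\}$. Setting: nonempty $\mathcal C,\mathcal S,\mathcal K\subset L^0_{++}$ with $\frac{\mathcal C}{\mathcal S}\subset\mathcal K$, $\mathcal K$ a cone, $(\mathcal C,\cdot)$ a group, and (so that all expressions are defined) $\mathcal K\subset\mathcal C$ and $\mathcal S\subset\mathcal C$; pricing map $\pi\colon\mathcal S\to(0,\infty)$. $\mathcal C_{\log},\mathcal S_{\log},\mathcal K_{\log}$ are the images under $\log$. $\mathcal C_{\log}$ is equipped with a topology $\tau_{\log}$ making it a locally convex topological vector space; $\mathcal C$ carries $\tau=\{\exp(U):U\in\tau_{\log}\}$, so $\exp$ is a homeomorphism. A map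 $\varphi\colon\mathcal C\to\mathbb R$ is log-linear if $\varphi(X^\alpha Y^\beta)=\alpha\varphi(X)+\beta\varphi(Y)$ for $X,Y\in\mathcal C$, $\alpha,\beta\in\mathbb R$; equivalently the log-linear $\tau$-continuous maps are exactly $\psi\circ\log$ with $\psi$ in the topological dual of $\mathcal C_{\log}$. A return risk measure (RRM), with $L^\infty_{++}\subset\mathcal K$, is a positively homogeneous nondecreasing $\tilde\rho\colon\mathcal K\to(0,\infty)$ with $\tilde\rho(1)=1$; $\mathcal B_{\tilde\rho}=\{K\in\mathcal K:\tilde\rho(K)\le1\}$; $\mathfrak R=(\mathcal B_{\tilde\rho},\mathcal S,\pi)$; MARRM $\eta_{\mathfrak R}(X)=\inf\{\pi(Z):Z\in\mathcal S,\ X/Z\in\mathcal B_{\tilde\rho}\}$. Further $\nu=\log\circ\tilde\rho\circ\exp$, $\mathcal A_\nu=\{Y\in\mathcal K_{\log}:\nu(Y)\le0\}$, $\pi_{\log}=\log\circ\pi\circ\exp$ on $\mathcal S_{\log}$, and $\rho_{\mathcal A_\nu,\mathcal S_{\log},\pi_{\log}}(X_{\log})=\inf\{\pi_{\log}(L):L\in\mathcal S_{\log},\ X_{\log}-L\in\mathcal A_\nu\}$ on $\mathcal C_{\log}$. Proper means: never $-\infty$ and finite at some point. Conventions $\exp(-\infty)=0$, $\exp(\infty)=\infty$. *)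

theory Defs
  imports "HOL-Probability.Probability"
begin

text \<open>Random variables are real-valued functions on the sample space; elements of
  L0_{++} are represented by measurable, (everywhere) strictly positive representatives.\<close>

definition L0pp :: "'a measure \<Rightarrow> ('a \<Rightarrow> real) set" where
  "L0pp M = {X. X \<in> borel_measurable M \<and> (\<forall>\<omega>. 0 < X \<omega>)}"

definition Linfpp :: "'a measure \<Rightarrow> ('a \<Rightarrow> real) set" where
  "Linfpp M = {X \<in> L0pp M. \<exists>c. AE \<omega> in M. X \<omega> \<le> c}"

definition lnv :: "('a \<Rightarrow> real) \<Rightarrow> ('a \<Rightarrow> real)" where
  "lnv X = (\<lambda>\<omega>. ln (X \<omega>))"

definition expv :: "('a \<Rightarrow> real) \<Rightarrow> ('a \<Rightarrow> real)" where
  "expv X = (\<lambda>\<omega>. exp (X \<omega>))"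

fun eexp :: "ereal \<Rightarrow> ereal" where
  "eexp (ereal x) = ereal (exp x)"
| "eexp PInfty = PInfty"
| "eexp MInfty = 0"

definition lctvs :: "('a \<Rightarrow> real) set \<Rightarrow> ('a \<Rightarrow> real) topology \<Rightarrow> bool" where
  "lctvs V T \<longleftrightarrow>
     topspace T = V \<and>
     (\<lambda>\<omega>. 0) \<in> V \<and>
     (\<forall>f\<in>V. \<forall>g\<in>V. (\<lambda>\<omega>. f \<omega> + g \<omega>) \<in> V) \<and>
     (\<forall>a::real. \<forall>f\<in>V. (\<lambda>\<omega>. a * f \<omega>) \<in> V) \<and>
     continuous_map (prod_topology T T) T (\<lambda>(f, g). \<lambda>\<omega>. f \<omega> + g \<omega>) \<and>
     continuous_map (prod_topology euclideanreal T) T (\<lambda>(a, f). \<lambda>\<omega>. a * f \<omega>) \<and>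
     Hausdorff_space T \<and>
     (\<forall>x\<in>V. \<forall>U. openin T U \<and> x \<in> U \<longrightarrow>
        (\<exists>W. openin T W \<and> x \<in> W \<and> W \<subseteq> U \<and>
             (\<forall>f\<in>W. \<forall>g\<in>W. \<forall>t::real. 0 \<le> t \<and> t \<le> 1 \<longrightarrow>
                 (\<lambda>\<omega>. t * f \<omega> + (1 - t) * g \<omega>) \<in> W)))"

text \<open>The topology tau on C: the sets exp(U), U open in tau_log (equivalently
  the pullback of tau_log along the pointwise log on C).\<close>
definition tau_of :: "('a \<Rightarrow> real) set \<Rightarrow> ('a \<Rightarrow> real) topology \<Rightarrow> ('a \<Rightarrow> real) topology" where
  "tau_of C Tlog = pullback_topology C lnv Tlog"

definition log_linear :: "('a \<Rightarrow> real) set \<Rightarrow> (('a \<Rightarrow> real) \<Rightarrow> real) \<Rightarrow> bool" where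
  "log_linear C \<phi> \<longleftrightarrow> (\<forall>X\<in>C. \<forall>Y\<in>C. \<forall>\<alpha> \<beta>::real.
      \<phi> (\<lambda>\<omega>. X \<omega> powr \<alpha> * Y \<omega> powr \<beta>) = \<alpha> * \<phi> X + \<beta> * \<phi> Y)"

definition RRM :: "'a measure \<Rightarrow> ('a \<Rightarrow> real) set \<Rightarrow> (('a \<Rightarrow> real) \<Rightarrow> real) \<Rightarrow> bool" where
  "RRM M K \<rho>t \<longleftrightarrow> Linfpp M \<subseteq> K \<and>
     (\<forall>X\<in>K. 0 < \<rho>t X) \<and>
     (\<forall>X\<in>K. \<forall>l>0. \<rho>t (\<lambda>\<omega>. l * X \<omega>) = l * \<rho>t X) \<and>
     (\<forall>X\<in>K. \<forall>Y\<in>K. (AE \<omega> in M. X \<omega> \<le> Y \<omega>) \<longrightarrow> \<rho>t X \<le> \<rho>t Y) \<and>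
     \<rho>t (\<lambda>\<omega>. 1) = 1"

definition acc_set :: "('a \<Rightarrow> real) set \<Rightarrow> (('a \<Rightarrow> real) \<Rightarrow> real) \<Rightarrow> ('a \<Rightarrow> real) set" where
  "acc_set K \<rho>t = {X \<in> K. \<rho>t X \<le> 1}"

definition marrm :: "('a \<Rightarrow> real) set \<Rightarrow> ('a \<Rightarrow> real) set \<Rightarrow> (('a \<Rightarrow> real) \<Rightarrow> real)
     \<Rightarrow> ('a \<Rightarrow> real) \<Rightarrow> ereal" where
  "marrm B S \<pi> X = Inf {ereal (\<pi> Z) | Z. Z \<in> S \<and> (\<lambda>\<omega>. X \<omega> / Z \<omega>) \<in> B}"

definition rho_add :: "('a \<Rightarrow> real) set \<Rightarrow> ('a \<Rightarrow> real) set \<Rightarrow> (('a \<Rightarrow> real) \<Rightarrow> real)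
     \<Rightarrow> ('a \<Rightarrow> real) \<Rightarrow> ereal" where
  "rho_add A S \<pi> X = Inf {ereal (\<pi> L) | L. L \<in> S \<and> (\<lambda>\<omega>. X \<omega> - L \<omega>) \<in> A}"

definition proper_on :: "('a \<Rightarrow> real) set \<Rightarrow> (('a \<Rightarrow> real) \<Rightarrow> ereal) \<Rightarrow> bool" where
  "proper_on V f \<longleftrightarrow> (\<forall>x\<in>V. f x \<noteq> -\<infinity>) \<and> (\<exists>x\<in>V. f x \<noteq> \<infinity>)"

definition convex_on_ereal :: "('a \<Rightarrow> real) set \<Rightarrow> (('a \<Rightarrow> real) \<Rightarrow> ereal) \<Rightarrow> bool" where
  "convex_on_ereal V f \<longleftrightarrow> (\<forall>x\<in>V. \<forall>y\<in>V. \<forall>t::real. 0 < t \<and> t < 1 \<longrightarrow>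
      f (\<lambda>\<omega>. t * x \<omega> + (1 - t) * y \<omega>) \<le> ereal t * f x + ereal (1 - t) * f y)"

definition lsc_on :: "('a \<Rightarrow> real) topology \<Rightarrow> (('a \<Rightarrow> real) \<Rightarrow> ereal) \<Rightarrow> bool" where
  "lsc_on T f \<longleftrightarrow> (\<forall>c::real. closedin T {x \<in> topspace T. f x \<le> ereal c})"

end

theory Submission
  imports Defs "HOL-Library.Function_Algebras"
begin

text \<open>The logarithm turns the multiplicative setting into an additive one: the MARRM satisfies
  \<open>log \<eta>(X) = \<rho>(log X)\<close> for the additive risk measure \<open>\<rho>\<close> on the locally convex space \<open>log C\<close>.
  A proper, convex, lower semicontinuous \<open>\<rho>\<close> is the supremum of its continuous affine minorants
  \<open>\<psi> + a\<close>; these are obtained by separating a point below the graph from the epigraph, using the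
  algebraic Hahn--Banach theorem and the Minkowski functional of an open convex set.
  For a minorant, \<open>\<phi> = \<psi> \<circ> log\<close> is log-linear and continuous, and \<open>\<rho>(log Y + log Z) \<le> log \<pi>(Z)\<close>
  for acceptable \<open>Y\<close> and \<open>Z \<in> S\<close> bounds \<open>sup\<^sub>B \<phi> + sup\<^sub>S (\<phi> - log \<pi>)\<close> by \<open>-a\<close>; boundedness on
  the acceptance set in turn forces \<open>\<phi> \<ge> 0\<close> on elements \<open>\<ge> 1\<close>. Conversely every admissible \<open>\<phi>\<close>
  gives a lower bound for \<open>\<eta>(X)\<close> because \<open>\<phi>(X) = \<phi>(X/Z) + \<phi>(Z)\<close>.\<close>

section \<open>Algebraic Hahn--Banach theorem\<close>

definition linear_on :: "'v::real_vector set \<Rightarrow> ('v \<Rightarrow> real) \<Rightarrow> bool" where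
  "linear_on V f \<longleftrightarrow>
     (\<forall>x\<in>V. \<forall>y\<in>V. f (x + y) = f x + f y) \<and> (\<forall>x\<in>V. \<forall>c. f (c *\<^sub>R x) = c * f x)"

lemma linear_on_add: "linear_on V f \<Longrightarrow> x \<in> V \<Longrightarrow> y \<in> V \<Longrightarrow> f (x + y) = f x + f y"
  and linear_on_scale: "linear_on V f \<Longrightarrow> x \<in> V \<Longrightarrow> f (c *\<^sub>R x) = c * f x"
  by (simp_all add: linear_on_def)

lemma linear_on_diff:
  assumes "linear_on V f" "subspace V" "x \<in> V" "y \<in> V"
  shows "f (x - y) = f x - f y"
  using linear_on_add[OF assms(1,3) subspace_neg[OF assms(2,4)]]
    linear_on_scale[OF assms(1,4), of "-1"] by simp

lemma linear_on_zero: "linear_on V f \<Longrightarrow> subspace V \<Longrightarrow> f 0 = 0"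
  using linear_on_scale[of V f 0 0] subspace_0 by fastforce

lemma linear_on_cmult: "linear_on V f \<Longrightarrow> linear_on V (\<lambda>x. c * f x)"
  and linear_on_plus: "linear_on V f \<Longrightarrow> linear_on V g \<Longrightarrow> linear_on V (\<lambda>x. f x + g x)"
  by (simp_all add: linear_on_def algebra_simps)

definition sublinear_on :: "'v::real_vector set \<Rightarrow> ('v \<Rightarrow> real) \<Rightarrow> bool" where
  "sublinear_on V p \<longleftrightarrow>
     (\<forall>x\<in>V. \<forall>y\<in>V. p (x + y) \<le> p x + p y) \<and> (\<forall>x\<in>V. \<forall>t>0. p (t *\<^sub>R x) = t * p x)"

text \<open>Partial linear functionals are represented by their graphs, so that Zorn's lemma
  applies: the union of a chain of graphs is again a graph.\<close>

locale dominated_linear_graph =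
  fixes V :: "'v::real_vector set" and p :: "'v \<Rightarrow> real" and G :: "('v \<times> real) set"
  assumes graph_subset: "(x, a) \<in> G \<Longrightarrow> x \<in> V"
    and graph_zero: "(0, 0) \<in> G"
    and graph_add: "(x, a) \<in> G \<Longrightarrow> (y, b) \<in> G \<Longrightarrow> (x + y, a + b) \<in> G"
    and graph_scale: "(x, a) \<in> G \<Longrightarrow> (c *\<^sub>R x, c * a) \<in> G"
    and graph_unique: "(x, a) \<in> G \<Longrightarrow> (x, b) \<in> G \<Longrightarrow> a = b"
    and graph_le: "(x, a) \<in> G \<Longrightarrow> a \<le> p x"
begin

lemma extension_constant:
  assumes "subspace V" "sublinear_on V p" "x \<in> V"
  obtains c where "\<And>u a. (u, a) \<in> G \<Longrightarrow> a - p (u - x) \<le> c"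
    and "\<And>v b. (v, b) \<in> G \<Longrightarrow> c \<le> p (v + x) - b"
proof -
  have key: "a - p (u - x) \<le> p (v + x) - b" if "(u, a) \<in> G" "(v, b) \<in> G" for u a v b
  proof -
    have uv: "u \<in> V" "v \<in> V" using that graph_subset by auto
    have "a + b \<le> p ((u - x) + (v + x))"
      using graph_le[OF graph_add[OF that]] by simp
    also have "\<dots> \<le> p (u - x) + p (v + x)"
      using assms uv subspace_diff[of V u x] subspace_add[of V v x]
      unfolding sublinear_on_def by blast
    finally show ?thesis by linarith
  qed
  define L where "L = {a - p (u - x) | u a. (u, a) \<in> G}"
  have L: "L \<noteq> {}" using graph_zero by (auto simp: L_def)
  have "bdd_above L"
    unfolding bdd_above_def L_def using key[OF _ graph_zero] by auto
  show thesis
  proof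
    show "a - p (u - x) \<le> Sup L" if "(u, a) \<in> G" for u a
      by (rule cSup_upper[OF _ \<open>bdd_above L\<close>]) (use that in \<open>auto simp: L_def\<close>)
    show "Sup L \<le> p (v + x) - b" if "(v, b) \<in> G" for v b
      by (rule cSup_least[OF L]) (use key that in \<open>auto simp: L_def\<close>)
  qed
qed

lemma extension_dominated:
  assumes V: "subspace V" and p: "sublinear_on V p" and x: "x \<in> V"
    and below: "\<And>u a. (u, a) \<in> G \<Longrightarrow> a - p (u - x) \<le> c"
    and above: "\<And>v b. (v, b) \<in> G \<Longrightarrow> c \<le> p (v + x) - b"
    and u: "(u, a) \<in> G"
  shows "a + t * c \<le> p (u + t *\<^sub>R x)"
proof -
  have uV: "u \<in> V" using u graph_subset by blast
  have hom: "p (s *\<^sub>R y) = s * p y" if "y \<in> V" "s > 0" for s y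
    using p that by (simp add: sublinear_on_def)
  consider "t = 0" | "t > 0" | "t < 0" by linarith
  then show ?thesis
  proof cases
    case 1 then show ?thesis using graph_le[OF u] by simp
  next
    case 2
    have inV: "inverse t *\<^sub>R u + x \<in> V" using V uV x by (intro subspace_add subspace_scale)
    have "c \<le> p (inverse t *\<^sub>R u + x) - inverse t * a"
      by (rule above[OF graph_scale[OF u]])
    then have "t * c \<le> t * (p (inverse t *\<^sub>R u + x) - inverse t * a)"
      using 2 by (simp add: mult_left_mono)
    then have "t * c \<le> t * p (inverse t *\<^sub>R u + x) - a"
      using 2 by (simp add: right_diff_distrib mult.assoc[symmetric])
    also have "t * p (inverse t *\<^sub>R u + x) = p (u + t *\<^sub>R x)"
      using hom[OF inV 2] 2 by (simp add: scaleR_add_right)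
    finally show ?thesis by simp
  next
    case 3
    have inV: "inverse (- t) *\<^sub>R u - x \<in> V" using V uV x by (intro subspace_diff subspace_scale)
    have "inverse (- t) * a - p (inverse (- t) *\<^sub>R u - x) \<le> c"
      by (rule below[OF graph_scale[OF u]])
    then have "(- t) * (inverse (- t) * a - p (inverse (- t) *\<^sub>R u - x)) \<le> (- t) * c"
      using 3 by (simp add: mult_left_mono)
    then have "a - (- t) * p (inverse (- t) *\<^sub>R u - x) \<le> (- t) * c"
      using 3 by (simp add: right_diff_distrib mult.assoc[symmetric])
    also have "(- t) * p (inverse (- t) *\<^sub>R u - x) = p (u + t *\<^sub>R x)"
      using hom[OF inV, of "- t"] 3 by (simp add: scaleR_diff_right)
    finally show ?thesis by simp
  qed
qed

lemma extension_unique: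
  assumes x: "x \<notin> fst ` G" and uv: "(u, a) \<in> G" "(v, b) \<in> G"
    and eq: "u + t *\<^sub>R x = v + s *\<^sub>R x"
  shows "t = s"
proof (rule ccontr)
  assume ts: "t \<noteq> s"
  have "(v - u, b - a) \<in> G" using graph_add[OF uv(2) graph_scale[OF uv(1), of "-1"]] by simp
  moreover have "v - u = (t - s) *\<^sub>R x" using eq by (simp add: algebra_simps)
  ultimately have "(x, (b - a) / (t - s)) \<in> G"
    using graph_scale[of "v - u" "b - a" "1 / (t - s)"] ts by simp
  then show False using x by force
qed

lemma exists_strict_extension:
  assumes V: "subspace V" and p: "sublinear_on V p" and x: "x \<in> V" "x \<notin> fst ` G"
  shows "\<exists>G'. dominated_linear_graph V p G' \<and> G \<subset> G'"
proof -
  obtain c where below: "\<And>u a. (u, a) \<in> G \<Longrightarrow> a - p (u - x) \<le> c"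
    and above: "\<And>v b. (v, b) \<in> G \<Longrightarrow> c \<le> p (v + x) - b"
    using extension_constant[OF V p x(1)] by blast
  define G' where "G' = {(u + t *\<^sub>R x, a + t * c) | u a t. (u, a) \<in> G}"
  have memG': "(u + t *\<^sub>R x, a + t * c) \<in> G'" if "(u, a) \<in> G" for u a t
    using that unfolding G'_def by blast
  have "dominated_linear_graph V p G'"
  proof
    fix y a assume "(y, a) \<in> G'"
    then obtain u a' t where u: "(u, a') \<in> G" and y: "y = u + t *\<^sub>R x" and a: "a = a' + t * c"
      unfolding G'_def by blast
    show "y \<in> V" using graph_subset[OF u] V x(1) y by (simp add: subspace_add subspace_scale)
    show "a \<le> p y"
      unfolding y a by (rule extension_dominated[OF V p x(1) below above u])
  next
    show "(0, 0) \<in> G'" using memG'[OF graph_zero, of 0] by simp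
  next
    fix y a z b assume "(y, a) \<in> G'" "(z, b) \<in> G'"
    then obtain u a' t v b' s where "(u, a') \<in> G" "y = u + t *\<^sub>R x" "a = a' + t * c"
      "(v, b') \<in> G" "z = v + s *\<^sub>R x" "b = b' + s * c" unfolding G'_def by blast
    then show "(y + z, a + b) \<in> G'"
      using memG'[OF graph_add, of u a' v b' "t + s"] by (simp add: algebra_simps)
  next
    fix y a k assume "(y, a) \<in> G'"
    then obtain u a' t where "(u, a') \<in> G" "y = u + t *\<^sub>R x" "a = a' + t * c"
      unfolding G'_def by blast
    then show "(k *\<^sub>R y, k * a) \<in> G'"
      using memG'[OF graph_scale, of u a' k "k * t"] by (simp add: algebra_simps)
  next
    fix y a b assume "(y, a) \<in> G'" "(y, b) \<in> G'"
    then obtain u a' t v b' s where uG: "(u, a') \<in> G" and y1: "y = u + t *\<^sub>R x"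
      and a: "a = a' + t * c" and vG: "(v, b') \<in> G" and y2: "y = v + s *\<^sub>R x"
      and b: "b = b' + s * c" unfolding G'_def by blast
    have "t = s" using extension_unique[OF x(2) uG vG] y1 y2 by simp
    then show "a = b" using y1 y2 a b graph_unique[OF uG] vG by auto
  qed
  moreover have "G \<subseteq> G'" using memG'[of _ _ 0] by force
  moreover have "(x, c) \<in> G' - G"
    using memG'[OF graph_zero, of 1] x(2) by force
  ultimately show ?thesis by blast
qed

end

lemma dominated_linear_graph_chain_Union:
  assumes "Ch \<in> chains {G. dominated_linear_graph V p G}" "Ch \<noteq> {}"
  shows "dominated_linear_graph V p (\<Union>Ch)"
proof -
  have Ch: "\<And>G. G \<in> Ch \<Longrightarrow> dominated_linear_graph V p G"
    using chainsD2[OF assms(1)] by blast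
  have two: "\<exists>G\<in>Ch. z \<in> G \<and> z' \<in> G" if "z \<in> \<Union>Ch" "z' \<in> \<Union>Ch" for z z'
    using that chainsD[OF assms(1)] by blast
  show ?thesis
  proof
    fix x a y b assume "(x, a) \<in> \<Union>Ch" "(y, b) \<in> \<Union>Ch"
    then obtain G where "G \<in> Ch" "(x, a) \<in> G" "(y, b) \<in> G" using two by blast
    then show "(x + y, a + b) \<in> \<Union>Ch" using Ch dominated_linear_graph.graph_add by blast
  next
    fix x a b assume "(x, a) \<in> \<Union>Ch" "(x, b) \<in> \<Union>Ch"
    then obtain G where "G \<in> Ch" "(x, a) \<in> G" "(x, b) \<in> G" using two by blast
    then show "a = b" using Ch dominated_linear_graph.graph_unique by blast
  next
    obtain G where "G \<in> Ch" using assms(2) by blast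
    then show "(0, 0) \<in> \<Union>Ch" using Ch dominated_linear_graph.graph_zero by blast
  qed (use Ch dominated_linear_graph.graph_subset dominated_linear_graph.graph_scale
      dominated_linear_graph.graph_le in blast)+
qed

theorem hahn_banach_dominated_extension:
  assumes V: "subspace V" and p: "sublinear_on V p" and G0: "dominated_linear_graph V p G0"
  obtains \<Psi> where "linear_on V \<Psi>" "\<And>x a. (x, a) \<in> G0 \<Longrightarrow> \<Psi> x = a"
    "\<And>x. x \<in> V \<Longrightarrow> \<Psi> x \<le> p x"
proof -
  define Gs where "Gs = {G. dominated_linear_graph V p G \<and> G0 \<subseteq> G}"
  have "\<exists>U\<in>Gs. \<forall>G\<in>Ch. G \<subseteq> U" if Ch: "Ch \<in> chains Gs" for Ch
  proof (cases "Ch = {}")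
    case True then show ?thesis using G0 by (auto simp: Gs_def)
  next
    case False
    have "Ch \<in> chains {G. dominated_linear_graph V p G}"
      using Ch by (auto simp: chains_def chain_subset_def Gs_def)
    then have "\<Union>Ch \<in> Gs"
      using dominated_linear_graph_chain_Union False chainsD2[OF Ch] by (fastforce simp: Gs_def)
    then show ?thesis by blast
  qed
  from Zorn_Lemma2[OF ballI[OF this]] obtain G where "G \<in> Gs"
    and maximal: "\<And>G'. G' \<in> Gs \<Longrightarrow> G \<subseteq> G' \<Longrightarrow> G' = G"
    by blast
  then interpret G: dominated_linear_graph V p G by (simp add: Gs_def)
  have G0G: "G0 \<subseteq> G" using \<open>G \<in> Gs\<close> by (simp add: Gs_def)
  have total: "v \<in> fst ` G" if v: "v \<in> V" for v
  proof (rule ccontr)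
    assume "v \<notin> fst ` G"
    then obtain G' where "dominated_linear_graph V p G'" "G \<subset> G'"
      using G.exists_strict_extension[OF V p v] by blast
    then show False using maximal[of G'] G0G by (auto simp: Gs_def)
  qed
  define \<Psi> where "\<Psi> v = (THE a. (v, a) \<in> G)" for v
  have graph_eq: "\<Psi> v = a" if "(v, a) \<in> G" for v a
    unfolding \<Psi>_def using that G.graph_unique[OF that] by blast
  have graph: "(v, \<Psi> v) \<in> G" if "v \<in> V" for v
    using total[OF that] graph_eq by force
  show thesis
  proof
    show "linear_on V \<Psi>"
      unfolding linear_on_def
      using graph_eq G.graph_add[OF graph graph] G.graph_scale[OF graph] by blast
    show "\<Psi> x = a" if "(x, a) \<in> G0" for x a using that G0G graph_eq by blast
    show "\<Psi> x \<le> p x" if "x \<in> V" for x using G.graph_le[OF graph[OF that]] .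
  qed
qed

theorem hahn_banach_normalized:
  assumes V: "subspace V" and p: "sublinear_on V p" and nonneg: "\<And>x. x \<in> V \<Longrightarrow> 0 \<le> p x"
    and x1: "x1 \<in> V" "x1 \<noteq> 0" "1 \<le> p x1"
  obtains \<Psi> where "linear_on V \<Psi>" "\<Psi> x1 = 1" "\<And>x. x \<in> V \<Longrightarrow> \<Psi> x \<le> p x"
proof -
  define G where "G = {(t *\<^sub>R x1, t) | t. True}"
  have "dominated_linear_graph V p G"
  proof
    fix x a assume "(x, a) \<in> G"
    then obtain t where t: "x = t *\<^sub>R x1" "a = t" by (auto simp: G_def)
    show "x \<in> V" unfolding t by (rule subspace_scale[OF V x1(1)])
    show "a \<le> p x"
    proof (cases "0 < t")
      case True
      then have "p x = t * p x1" using p x1(1) unfolding t sublinear_on_def by blast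
      then show ?thesis using x1(3) True t by simp
    next
      case False
      then show ?thesis using nonneg[OF \<open>x \<in> V\<close>] t by simp
    qed
  next
    fix x a b assume "(x, a) \<in> G" "(x, b) \<in> G"
    then show "a = b" using x1(2) by (auto simp: G_def)
  qed (force simp: G_def algebra_simps)+
  from hahn_banach_dominated_extension[OF V p this] obtain \<Psi> where \<Psi>: "linear_on V \<Psi>"
    "\<And>x a. (x, a) \<in> G \<Longrightarrow> \<Psi> x = a" "\<And>x. x \<in> V \<Longrightarrow> \<Psi> x \<le> p x"
    by blast
  have "(1 *\<^sub>R x1, 1) \<in> G" by (auto simp: G_def)
  from \<Psi>(2)[OF this] show thesis using that \<Psi>(1,3) by simp
qed

section \<open>Separation of convex sets by the Minkowski functional\<close>

definition minkowski_functional :: "'v::real_vector set \<Rightarrow> 'v \<Rightarrow> real" where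
  "minkowski_functional B v = Inf {t. 0 < t \<and> inverse t *\<^sub>R v \<in> B}"

lemma minkowski_functional_le: "0 < t \<Longrightarrow> inverse t *\<^sub>R v \<in> B \<Longrightarrow> minkowski_functional B v \<le> t"
  unfolding minkowski_functional_def by (rule cInf_lower) (auto intro: bdd_belowI[of _ 0])

locale absorbing_convex_set =
  fixes V B :: "'v::real_vector set"
  assumes V: "subspace V" and B: "convex B" "0 \<in> B"
    and absorbing: "\<And>v. v \<in> V \<Longrightarrow> \<exists>e>0. e *\<^sub>R v \<in> B"
begin

lemma minkowski_functional_set_nonempty:
  assumes "v \<in> V" shows "{t. 0 < t \<and> inverse t *\<^sub>R v \<in> B} \<noteq> {}"
proof -
  obtain e where "e > 0" "e *\<^sub>R v \<in> B" using absorbing[OF assms] by blast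
  then have "inverse e \<in> {t. 0 < t \<and> inverse t *\<^sub>R v \<in> B}" by simp
  then show ?thesis by blast
qed

lemma minkowski_functional_nonneg: "v \<in> V \<Longrightarrow> 0 \<le> minkowski_functional B v"
  unfolding minkowski_functional_def
  by (rule cInf_greatest[OF minkowski_functional_set_nonempty]) auto

lemma minkowski_functional_less_imp_mem:
  assumes v: "v \<in> V" and less: "minkowski_functional B v < t"
  shows "0 < t" "inverse t *\<^sub>R v \<in> B"
proof -
  obtain s where s: "0 < s" "inverse s *\<^sub>R v \<in> B" "s < t"
    using cInf_lessD[OF minkowski_functional_set_nonempty[OF v] less[unfolded minkowski_functional_def]]
    by blast
  show "0 < t" using s by linarith
  have "(s / t) *\<^sub>R (inverse s *\<^sub>R v) + (1 - s / t) *\<^sub>R 0 \<in> B"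
    using s by (intro convexD[OF B(1) _ B(2)]) auto
  then show "inverse t *\<^sub>R v \<in> B" using s by (simp add: inverse_eq_divide)
qed

lemma minkowski_functional_scale_le:
  assumes "x \<in> V" "0 < t"
  shows "minkowski_functional B (t *\<^sub>R x) \<le> t * minkowski_functional B x"
proof (rule field_le_epsilon)
  fix e :: real assume "0 < e"
  define m where "m = minkowski_functional B x + e / t"
  have "minkowski_functional B x < m" using assms \<open>0 < e\<close> by (simp add: m_def)
  from minkowski_functional_less_imp_mem[OF assms(1) this]
  have m: "0 < m" "inverse m *\<^sub>R x \<in> B" .
  have "inverse (t * m) * t = inverse m" using m(1) assms(2) by (simp add: field_simps)
  then have "inverse (t * m) *\<^sub>R (t *\<^sub>R x) \<in> B" using m(2) by (simp only: scaleR_scaleR)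
  moreover have "0 < t * m" using m(1) assms(2) by simp
  ultimately have "minkowski_functional B (t *\<^sub>R x) \<le> t * m"
    using minkowski_functional_le by blast
  then show "minkowski_functional B (t *\<^sub>R x) \<le> t * minkowski_functional B x + e"
    using assms(2) by (simp add: m_def distrib_left)
qed

lemma sublinear_on_minkowski_functional: "sublinear_on V (minkowski_functional B)"
  unfolding sublinear_on_def
proof (intro conjI ballI allI impI)
  let ?p = "minkowski_functional B"
  fix x y assume xy: "x \<in> V" "y \<in> V"
  show "?p (x + y) \<le> ?p x + ?p y"
  proof (rule field_le_epsilon)
    fix e :: real assume "0 < e"
    define s t where "s = ?p x + e / 2" and "t = ?p y + e / 2"
    have st: "0 < s" "inverse s *\<^sub>R x \<in> B" "0 < t" "inverse t *\<^sub>R y \<in> B"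
      using minkowski_functional_less_imp_mem xy \<open>0 < e\<close> unfolding s_def t_def by auto
    have "(s / (s + t)) *\<^sub>R (inverse s *\<^sub>R x) + (t / (s + t)) *\<^sub>R (inverse t *\<^sub>R y) \<in> B"
      using mem_convex_alt[OF B(1) st(2,4), of s t] st by simp
    also have "(s / (s + t)) *\<^sub>R (inverse s *\<^sub>R x) + (t / (s + t)) *\<^sub>R (inverse t *\<^sub>R y)
        = inverse (s + t) *\<^sub>R (x + y)"
    proof -
      have "s / (s + t) * inverse s = inverse (s + t)" "t / (s + t) * inverse t = inverse (s + t)"
        using st by (simp_all add: field_simps)
      then show ?thesis by (simp only: scaleR_scaleR scaleR_add_right)
    qed
    finally have "?p (x + y) \<le> s + t"
      using st by (intro minkowski_functional_le) auto
    then show "?p (x + y) \<le> ?p x + ?p y + e" unfolding s_def t_def by simp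
  qed
next
  let ?p = "minkowski_functional B"
  fix x and t :: real assume x: "x \<in> V" and t: "0 < t"
  show "?p (t *\<^sub>R x) = t * ?p x"
  proof (rule antisym)
    show "?p (t *\<^sub>R x) \<le> t * ?p x" by (rule minkowski_functional_scale_le[OF x t])
    have "?p x \<le> inverse t * ?p (t *\<^sub>R x)"
      using minkowski_functional_scale_le[OF subspace_scale[OF V x, of t], of "inverse t"] t by simp
    then show "t * ?p x \<le> ?p (t *\<^sub>R x)" using t by (simp add: field_simps)
  qed
qed

lemma minkowski_functional_ge_1: "v \<in> V \<Longrightarrow> v \<notin> B \<Longrightarrow> 1 \<le> minkowski_functional B v"
  using minkowski_functional_less_imp_mem(2)[of v 1] by force

lemma minkowski_functional_less_1:
  assumes "0 < e" "(1 + e) *\<^sub>R b \<in> B"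
  shows "minkowski_functional B b < 1"
proof -
  have "minkowski_functional B b \<le> inverse (1 + e)"
    using assms by (intro minkowski_functional_le) auto
  also have "\<dots> < 1" using assms(1) by (simp add: inverse_less_1_iff)
  finally show ?thesis .
qed

end

definition algebraically_open :: "'v::real_vector set \<Rightarrow> 'v set \<Rightarrow> bool" where
  "algebraically_open V A \<longleftrightarrow>
     A \<subseteq> V \<and> (\<forall>a\<in>A. \<forall>w\<in>V. \<exists>e>0. \<forall>d. 0 \<le> d \<and> d \<le> e \<longrightarrow> a + d *\<^sub>R w \<in> A)"

lemma algebraically_openD:
  assumes "algebraically_open V A" "a \<in> A" "w \<in> V"
  obtains e where "e > 0" "\<And>d. 0 \<le> d \<Longrightarrow> d \<le> e \<Longrightarrow> a + d *\<^sub>R w \<in> A"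
proof -
  have "\<exists>e>0. \<forall>d. 0 \<le> d \<and> d \<le> e \<longrightarrow> a + d *\<^sub>R w \<in> A"
    using assms by (simp add: algebraically_open_def)
  with that show thesis by blast
qed

lemma algebraically_open_subset: "algebraically_open V A \<Longrightarrow> A \<subseteq> V"
  by (simp add: algebraically_open_def)

text \<open>Translating a point \<open>a0\<close> of \<open>A\<close> to the origin makes \<open>A\<close> absorbing; its Minkowski
  functional is \<open>< 1\<close> on the translate of \<open>A\<close> and \<open>\<ge> 1\<close> at \<open>- a0\<close>.\<close>

theorem algebraically_open_convex_separation:
  assumes V: "subspace V" and A: "algebraically_open V A" "convex A" "A \<noteq> {}" "0 \<notin> A"
  obtains \<Psi> where "linear_on V \<Psi>" "\<And>a. a \<in> A \<Longrightarrow> \<Psi> a < 0"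
proof -
  have AV: "A \<subseteq> V" using algebraically_open_subset[OF A(1)] .
  obtain a0 where a0: "a0 \<in> A" using A(3) by blast
  define B where "B = {b. b + a0 \<in> A}"
  have "convex B"
  proof (rule convexI)
    fix x y and u v :: real assume "x \<in> B" "y \<in> B" "0 \<le> u" "0 \<le> v" "u + v = 1"
    then have "u *\<^sub>R (x + a0) + v *\<^sub>R (y + a0) \<in> A" unfolding B_def by (intro convexD[OF A(2)]) auto
    moreover have "u *\<^sub>R (x + a0) + v *\<^sub>R (y + a0) = (u *\<^sub>R x + v *\<^sub>R y) + (u + v) *\<^sub>R a0"
      by (simp add: algebra_simps)
    ultimately show "u *\<^sub>R x + v *\<^sub>R y \<in> B" using \<open>u + v = 1\<close> by (simp add: B_def)
  qed
  moreover have "0 \<in> B" using a0 by (simp add: B_def)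
  moreover have "\<exists>e>0. e *\<^sub>R v \<in> B" if v: "v \<in> V" for v
  proof -
    obtain e where "e > 0" "a0 + e *\<^sub>R v \<in> A" by (rule algebraically_openD[OF A(1) a0 v]) auto
    then show ?thesis by (auto simp: B_def add.commute)
  qed
  ultimately interpret B: absorbing_convex_set V B using V by unfold_locales
  have x1: "- a0 \<in> V" "- a0 \<notin> B" "- a0 \<noteq> 0"
    using a0 AV A(4) by (auto simp: B_def intro: subspace_neg[OF V])
  obtain \<Psi> where \<Psi>: "linear_on V \<Psi>" "\<Psi> (- a0) = 1" "\<And>x. x \<in> V \<Longrightarrow> \<Psi> x \<le> minkowski_functional B x"
    using hahn_banach_normalized[OF V B.sublinear_on_minkowski_functional B.minkowski_functional_nonneg
        x1(1,3) B.minkowski_functional_ge_1[OF x1(1,2)]] by blast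
  show thesis
  proof (rule that[OF \<Psi>(1)])
    fix a assume a: "a \<in> A"
    have aV: "a \<in> V" using a AV by blast
    obtain e where e: "e > 0" "a + e *\<^sub>R (a - a0) \<in> A"
      by (rule algebraically_openD[OF A(1) a subspace_diff[OF V aV]]) (use a0 AV in auto)
    have "minkowski_functional B (a - a0) < 1"
      by (rule B.minkowski_functional_less_1[OF e(1)]) (use e in \<open>simp add: B_def algebra_simps\<close>)
    moreover have "\<Psi> (a + - a0) = \<Psi> a + 1" using linear_on_add[OF \<Psi>(1) aV x1(1)] \<Psi>(2) by simp
    ultimately show "\<Psi> a < 0" using \<Psi>(3)[OF subspace_diff[OF V aV], of a0] a0 AV by force
  qed
qed

lemma algebraically_open_lessThan: "algebraically_open UNIV {..<s::real}"
  unfolding algebraically_open_def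
proof (intro conjI ballI)
  fix a w :: real assume "a \<in> {..<s}"
  then have "0 < (s - a) / (\<bar>w\<bar> + 1)" by simp
  moreover have "a + d * w < s" if "0 \<le> d" "d \<le> (s - a) / (\<bar>w\<bar> + 1)" for d
  proof (cases "d = 0")
    case False
    then have "d * w < d * (\<bar>w\<bar> + 1)" using that by (intro mult_strict_left_mono) auto
    also have "\<dots> \<le> s - a" using that by (simp add: le_divide_eq)
    finally show ?thesis by simp
  qed (use \<open>a \<in> {..<s}\<close> in simp)
  ultimately show "\<exists>e>0. \<forall>d. 0 \<le> d \<and> d \<le> e \<longrightarrow> a + d *\<^sub>R w \<in> {..<s}" by auto
qed simp

lemma algebraically_open_Times:
  assumes A: "algebraically_open V A" and B: "algebraically_open W B"
  shows "algebraically_open (V \<times> W) (A \<times> B)"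
  unfolding algebraically_open_def
proof (intro conjI ballI)
  show "A \<times> B \<subseteq> V \<times> W" using A B by (auto dest: algebraically_open_subset)
  fix z w assume "z \<in> A \<times> B" "w \<in> V \<times> W"
  then have "fst z \<in> A" "fst w \<in> V" "snd z \<in> B" "snd w \<in> W" by auto
  then obtain e e' where e: "e > 0" "\<And>d. 0 \<le> d \<Longrightarrow> d \<le> e \<Longrightarrow> fst z + d *\<^sub>R fst w \<in> A"
    and e': "e' > 0" "\<And>d. 0 \<le> d \<Longrightarrow> d \<le> e' \<Longrightarrow> snd z + d *\<^sub>R snd w \<in> B"
    using algebraically_openD[OF A] algebraically_openD[OF B] by metis
  have "z + d *\<^sub>R w \<in> A \<times> B" if "0 \<le> d" "d \<le> min e e'" for d
    using e(2)[of d] e'(2)[of d] that by (simp add: mem_Times_iff)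
  then show "\<exists>e>0. \<forall>d. 0 \<le> d \<and> d \<le> e \<longrightarrow> z + d *\<^sub>R w \<in> A \<times> B"
    using e(1) e'(1) by (intro exI[of _ "min e e'"]) simp
qed

lemma algebraically_open_differences:
  assumes V: "subspace V" and A: "A \<subseteq> V" and B: "algebraically_open V B"
  shows "algebraically_open V (\<Union>a\<in>A. \<Union>b\<in>B. {a - b})"
  unfolding algebraically_open_def
proof (intro conjI ballI)
  show "(\<Union>a\<in>A. \<Union>b\<in>B. {a - b}) \<subseteq> V"
    using A algebraically_open_subset[OF B] by (auto intro: subspace_diff[OF V])
  fix z w assume "z \<in> (\<Union>a\<in>A. \<Union>b\<in>B. {a - b})" "w \<in> V"
  then obtain a b where ab: "a \<in> A" "b \<in> B" "z = a - b" and "- w \<in> V"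
    by (auto intro: subspace_neg[OF V])
  then obtain e where e: "e > 0" "\<And>d. 0 \<le> d \<Longrightarrow> d \<le> e \<Longrightarrow> b + d *\<^sub>R (- w) \<in> B"
    using algebraically_openD[OF B] by metis
  have "z + d *\<^sub>R w \<in> (\<Union>a\<in>A. \<Union>b\<in>B. {a - b})" if "0 \<le> d" "d \<le> e" for d
  proof -
    have "z + d *\<^sub>R w = a - (b + d *\<^sub>R (- w))" using ab(3) by simp
    then show ?thesis using ab(1) e(2)[OF that] by blast
  qed
  then show "\<exists>e>0. \<forall>d. 0 \<le> d \<and> d \<le> e \<longrightarrow> z + d *\<^sub>R w \<in> (\<Union>a\<in>A. \<Union>b\<in>B. {a - b})"
    using e(1) by blast
qed

section \<open>Locally convex spaces\<close>

locale locally_convex_space =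
  fixes V :: "'v::real_vector set" and T :: "'v topology"
  assumes topspace: "topspace T = V" and subspace: "subspace V"
    and continuous_add: "continuous_map (prod_topology T T) T (\<lambda>(x, y). x + y)"
    and continuous_scale: "continuous_map (prod_topology euclideanreal T) T (\<lambda>(a, x). a *\<^sub>R x)"
    and convex_nhds: "\<And>x U. openin T U \<Longrightarrow> x \<in> U \<Longrightarrow> \<exists>W. openin T W \<and> x \<in> W \<and> W \<subseteq> U \<and> convex W"
begin

lemma continuous_map_add:
  "continuous_map X T f \<Longrightarrow> continuous_map X T g \<Longrightarrow> continuous_map X T (\<lambda>x. f x + g x)"
  using continuous_map_compose[OF continuous_map_pairedI continuous_add] by (simp add: o_def)

lemma continuous_map_scaleR:
  "continuous_map X euclideanreal f \<Longrightarrow> continuous_map X T g \<Longrightarrow> continuous_map X T (\<lambda>x. f x *\<^sub>R g x)"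
  using continuous_map_compose[OF continuous_map_pairedI continuous_scale] by (simp add: o_def)

lemma continuous_map_affine: "b \<in> V \<Longrightarrow> continuous_map X T g \<Longrightarrow> continuous_map X T (\<lambda>x. b + c *\<^sub>R g x)"
  by (intro continuous_map_add continuous_map_scaleR) (simp_all add: topspace)

lemma openin_imp_algebraically_open:
  assumes "openin T U"
  shows "algebraically_open V U"
  unfolding algebraically_open_def
proof (intro conjI ballI)
  show "U \<subseteq> V" using openin_subset[OF assms] topspace by simp
  fix u w assume u: "u \<in> U" and w: "w \<in> V"
  with \<open>U \<subseteq> V\<close> have "continuous_map euclideanreal T (\<lambda>e. u + e *\<^sub>R w)"
    by (intro continuous_map_add continuous_map_scaleR continuous_map_id[unfolded id_def])
      (auto simp: topspace)
  from openin_continuous_map_preimage[OF this assms]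
  have "open {e. u + e *\<^sub>R w \<in> U}" by simp
  moreover have "0 \<in> {e. u + e *\<^sub>R w \<in> U}" using u by simp
  ultimately obtain d where "d > 0" "\<And>e. dist e 0 < d \<Longrightarrow> u + e *\<^sub>R w \<in> U"
    unfolding open_dist by blast
  then show "\<exists>e>0. \<forall>d. 0 \<le> d \<and> d \<le> e \<longrightarrow> u + d *\<^sub>R w \<in> U"
    by (intro exI[of _ "d / 2"]) auto
qed

text \<open>The reflection \<open>n \<mapsto> 2 x0 - n\<close> turns the lower bound on \<open>U\<close> into an upper bound
  near \<open>x0\<close>.\<close>

lemma linear_on_bounded_nhd:
  assumes lin: "linear_on V \<psi>" and U: "openin T U" "x0 \<in> U" and bnd: "\<And>u. u \<in> U \<Longrightarrow> m \<le> \<psi> u"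
  obtains W K where "openin T W" "x0 \<in> W" "\<And>w. w \<in> W \<Longrightarrow> \<bar>\<psi> w - \<psi> x0\<bar> < K"
proof -
  have x0: "x0 \<in> V" using openin_subset[OF U(1)] U(2) topspace by auto
  have x0x0: "x0 + x0 \<in> V" using subspace_add[OF subspace x0 x0] .
  define refl where "refl n = (x0 + x0) - n" for n
  have "continuous_map T T (\<lambda>n. (x0 + x0) + (-1) *\<^sub>R n)"
    using x0x0 by (intro continuous_map_affine continuous_map_id[unfolded id_def])
  then have "continuous_map T T refl" by (simp add: refl_def[abs_def])
  from openin_continuous_map_preimage[OF this U(1)]
  have W: "openin T (U \<inter> {n \<in> topspace T. refl n \<in> U})" by (rule openin_Int[OF U(1)])
  show thesis
  proof (rule that[OF W])
    show "x0 \<in> U \<inter> {n \<in> topspace T. refl n \<in> U}" using U(2) x0 topspace by (simp add: refl_def)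
    fix w assume w: "w \<in> U \<inter> {n \<in> topspace T. refl n \<in> U}"
    then have wV: "w \<in> V" using topspace by auto
    have "\<psi> (refl w) = 2 * \<psi> x0 - \<psi> w"
      unfolding refl_def linear_on_diff[OF lin subspace x0x0 wV] linear_on_add[OF lin x0 x0] by simp
    moreover have "m \<le> \<psi> w" "m \<le> \<psi> (refl w)" using bnd w by auto
    ultimately show "\<bar>\<psi> w - \<psi> x0\<bar> < \<psi> x0 - m + 1" by linarith
  qed
qed

lemma linear_on_small_near:
  assumes lin: "linear_on V \<psi>" and W: "openin T W" "x0 \<in> W"
    and K: "\<And>w. w \<in> W \<Longrightarrow> \<bar>\<psi> w - \<psi> x0\<bar> < K" and z: "z \<in> V" and e: "0 < e"
  obtains N where "openin T N" "z \<in> N" "\<And>n. n \<in> N \<Longrightarrow> \<bar>\<psi> n - \<psi> z\<bar> < e"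
proof -
  have x0: "x0 \<in> V" using openin_subset[OF W(1)] W(2) topspace by auto
  have "0 < K" using K[OF W(2)] by simp
  text \<open>The affine map \<open>n \<mapsto> x0 + (K/e) (n - z)\<close> carries a neighbourhood of \<open>z\<close> into \<open>W\<close>.\<close>
  define l where "l = K / e"
  define aff where "aff n = (x0 - l *\<^sub>R z) + l *\<^sub>R n" for n
  have l: "l > 0" using \<open>0 < K\<close> e by (simp add: l_def)
  have "continuous_map T T aff"
    unfolding aff_def using x0 z
    by (intro continuous_map_affine continuous_map_id[unfolded id_def])
      (simp_all add: subspace_diff[OF subspace] subspace_scale[OF subspace])
  then have N: "openin T {n \<in> topspace T. aff n \<in> W}"
    by (rule openin_continuous_map_preimage[OF _ W(1)])
  show thesis
  proof (rule that[OF N])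
    show "z \<in> {n \<in> topspace T. aff n \<in> W}" using z W(2) topspace by (simp add: aff_def)
    fix n assume n: "n \<in> {n \<in> topspace T. aff n \<in> W}"
    then have nV: "n \<in> V" using topspace by simp
    have lz: "l *\<^sub>R z \<in> V" and ln: "l *\<^sub>R n \<in> V"
      using z nV by (simp_all add: subspace_scale[OF subspace])
    have "\<psi> (aff n) = \<psi> (x0 - l *\<^sub>R z) + \<psi> (l *\<^sub>R n)"
      unfolding aff_def by (rule linear_on_add[OF lin subspace_diff[OF subspace x0 lz] ln])
    also have "\<dots> = \<psi> x0 - l * \<psi> z + l * \<psi> n"
      using linear_on_diff[OF lin subspace x0 lz] linear_on_scale[OF lin] z nV by simp
    finally have "\<psi> (aff n) - \<psi> x0 = l * (\<psi> n - \<psi> z)" by (simp add: algebra_simps)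
    with K[of "aff n"] n l have "l * \<bar>\<psi> n - \<psi> z\<bar> < K" by (simp add: abs_mult)
    also have "K = l * e" using e by (simp add: l_def)
    finally show "\<bar>\<psi> n - \<psi> z\<bar> < e" using l by simp
  qed
qed

lemma linear_on_continuous_if_bounded_below:
  assumes lin: "linear_on V \<psi>" and U: "openin T U" "x0 \<in> U" and bnd: "\<And>u. u \<in> U \<Longrightarrow> m \<le> \<psi> u"
  shows "continuous_map T euclideanreal \<psi>"
proof -
  obtain W K where W: "openin T W" "x0 \<in> W" and K: "\<And>w. w \<in> W \<Longrightarrow> \<bar>\<psi> w - \<psi> x0\<bar> < K"
    using linear_on_bounded_nhd[OF lin U bnd] by blast
  show ?thesis
    unfolding continuous_map_def
  proof (intro conjI allI impI)
    show "\<psi> \<in> topspace T \<rightarrow> topspace euclideanreal" by simp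
    fix S :: "real set" assume "openin euclideanreal S"
    then have S: "open S" by simp
    show "openin T {x \<in> topspace T. \<psi> x \<in> S}"
    proof (subst openin_subopen, intro ballI)
      fix z assume z: "z \<in> {x \<in> topspace T. \<psi> x \<in> S}"
      then have zV: "z \<in> V" using topspace by simp
      obtain e where e: "e > 0" "\<And>y. dist y (\<psi> z) < e \<Longrightarrow> y \<in> S"
        using S z unfolding open_dist by blast
      obtain N where N: "openin T N" "z \<in> N" "\<And>n. n \<in> N \<Longrightarrow> \<bar>\<psi> n - \<psi> z\<bar> < e"
        using linear_on_small_near[OF lin W K zV e(1)] by blast
      have "N \<subseteq> {x \<in> topspace T. \<psi> x \<in> S}"
        using N(3) e(2) openin_subset[OF N(1)] by (auto simp: dist_real_def)
      then show "\<exists>N. openin T N \<and> z \<in> N \<and> N \<subseteq> {x \<in> topspace T. \<psi> x \<in> S}"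
        using N(1,2) by blast
    qed
  qed
qed

end

section \<open>Continuous affine minorants of lower semicontinuous convex functions\<close>

definition ereal_convex_on :: "'v::real_vector set \<Rightarrow> ('v \<Rightarrow> ereal) \<Rightarrow> bool" where
  "ereal_convex_on V f \<longleftrightarrow> (\<forall>x\<in>V. \<forall>y\<in>V. \<forall>t. 0 < t \<and> t < 1 \<longrightarrow>
      f (t *\<^sub>R x + (1 - t) *\<^sub>R y) \<le> ereal t * f x + ereal (1 - t) * f y)"

definition ereal_epigraph :: "'v set \<Rightarrow> ('v \<Rightarrow> ereal) \<Rightarrow> ('v \<times> real) set" where
  "ereal_epigraph V f = {(y, t). y \<in> V \<and> f y \<le> ereal t}"

lemma convex_ereal_epigraph:
  fixes V :: "'v::real_vector set"
  assumes V: "convex V" and f: "ereal_convex_on V f"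
  shows "convex (ereal_epigraph V f)"
proof (rule convexI)
  fix z z' :: "'v \<times> real" and u v :: real
  assume "z \<in> ereal_epigraph V f" "z' \<in> ereal_epigraph V f" and uv: "0 \<le> u" "0 \<le> v" "u + v = 1"
  then obtain x t x' t' where z: "z = (x, t)" "z' = (x', t')" "x \<in> V" "x' \<in> V"
    and le: "f x \<le> ereal t" "f x' \<le> ereal t'"
    by (auto simp: ereal_epigraph_def)
  have "f (u *\<^sub>R x + v *\<^sub>R x') \<le> ereal (u * t + v * t')"
  proof (cases "u = 0 \<or> v = 0")
    case True
    then show ?thesis using uv le by auto
  next
    case False
    then have u: "0 < u" "u < 1" and v: "v = 1 - u" using uv by auto
    have "f (u *\<^sub>R x + v *\<^sub>R x') \<le> ereal u * f x + ereal v * f x'"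
      using f z(3,4) u unfolding ereal_convex_on_def v by blast
    also have "\<dots> \<le> ereal u * ereal t + ereal v * ereal t'"
      using uv le by (intro add_mono ereal_mult_left_mono) auto
    finally show ?thesis by simp
  qed
  then show "u *\<^sub>R z + v *\<^sub>R z' \<in> ereal_epigraph V f"
    using convexD[OF V z(3,4) uv] by (simp add: z ereal_epigraph_def)
qed

lemma linear_on_Times_UNIV:
  assumes V: "subspace V" and \<Psi>: "linear_on (V \<times> UNIV) \<Psi>"
  shows "linear_on V (\<lambda>y. \<Psi> (y, 0))"
    and "y \<in> V \<Longrightarrow> \<Psi> (y, t) = \<Psi> (y, 0) + \<Psi> (0, 1) * t"
proof -
  show "linear_on V (\<lambda>y. \<Psi> (y, 0))"
    unfolding linear_on_def
  proof (intro conjI ballI allI)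
    fix x y assume "x \<in> V" "y \<in> V"
    then show "\<Psi> (x + y, 0) = \<Psi> (x, 0) + \<Psi> (y, 0)"
      using linear_on_add[OF \<Psi>, of "(x, 0)" "(y, 0)"] by simp
  next
    fix x c assume "x \<in> V"
    then show "\<Psi> (c *\<^sub>R x, 0) = c * \<Psi> (x, 0)"
      using linear_on_scale[OF \<Psi>, of "(x, 0)" c] by simp
  qed
  assume y: "y \<in> V"
  have "\<Psi> ((y, 0) + t *\<^sub>R (0, 1)) = \<Psi> (y, 0) + t * \<Psi> (0, 1)"
    using linear_on_add[OF \<Psi>, of "(y, 0)" "t *\<^sub>R (0, 1)"] linear_on_scale[OF \<Psi>, of "(0, 1)" t]
      y subspace_0[OF V] by simp
  then show "\<Psi> (y, t) = \<Psi> (y, 0) + \<Psi> (0, 1) * t" by (simp add: mult.commute)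
qed

context locally_convex_space
begin

lemma epigraph_separation_from_open_box:
  assumes f: "ereal_convex_on V f"
    and W: "openin T W" "convex W" "W \<noteq> {}" "\<And>u. u \<in> W \<Longrightarrow> ereal s < f u"
    and y0: "y0 \<in> V" "f y0 \<le> ereal t0"
  obtains \<psi> c where "linear_on V \<psi>"
    "\<And>y t u \<tau>. y \<in> V \<Longrightarrow> f y \<le> ereal t \<Longrightarrow> u \<in> W \<Longrightarrow> \<tau> < s \<Longrightarrow> \<psi> y + c * t < \<psi> u + c * \<tau>"
proof -
  define A where "A = (\<Union>a\<in>ereal_epigraph V f. \<Union>b\<in>W \<times> {..<s}. {a - b})"
  have VR: "subspace (V \<times> (UNIV :: real set))" by (rule subspace_Times[OF subspace subspace_UNIV])
  have "ereal_epigraph V f \<subseteq> V \<times> UNIV" by (auto simp: ereal_epigraph_def)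
  then have "algebraically_open (V \<times> UNIV) A"
    unfolding A_def
    by (intro algebraically_open_differences VR algebraically_open_Times
        openin_imp_algebraically_open W(1) algebraically_open_lessThan)
  moreover have "convex A"
    unfolding A_def
    by (intro convex_differences convex_ereal_epigraph convex_Times W(2) subspace_imp_convex[OF subspace] f)
      (simp add: convex_real_interval)
  moreover have "A \<noteq> {}"
  proof -
    obtain w where "(w, s - 1) \<in> W \<times> {..<s}" using W(3) by auto
    moreover have "(y0, t0) \<in> ereal_epigraph V f" using y0 by (simp add: ereal_epigraph_def)
    ultimately have "(y0, t0) - (w, s - 1) \<in> A" unfolding A_def
      by (intro UN_I[of "(y0, t0)"] UN_I[of "(w, s - 1)"]) simp_all
    then show ?thesis by blast
  qed
  moreover have "0 \<notin> A"
  proof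
    assume "0 \<in> A"
    then obtain u \<tau> where u: "u \<in> W" "\<tau> < s" "f u \<le> ereal \<tau>"
      by (auto simp: A_def ereal_epigraph_def zero_prod_def)
    have "f u < ereal s" using u(2) by (intro order.strict_trans1[OF u(3)]) simp
    then show False using W(4)[OF u(1)] by simp
  qed
  ultimately obtain \<Psi> where \<Psi>: "linear_on (V \<times> UNIV) \<Psi>" "\<And>a. a \<in> A \<Longrightarrow> \<Psi> a < 0"
    using algebraically_open_convex_separation[OF VR] by blast
  show thesis
  proof (rule that[OF linear_on_Times_UNIV(1)[OF subspace \<Psi>(1)]])
    fix y t u \<tau> assume yu: "y \<in> V" "f y \<le> ereal t" "u \<in> W" "\<tau> < s"
    then have uV: "u \<in> V" using openin_subset[OF W(1)] topspace by auto
    have "(y, t) - (u, \<tau>) \<in> A" using yu by (auto simp: A_def ereal_epigraph_def)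
    then have "\<Psi> ((y, t) - (u, \<tau>)) < 0" by (rule \<Psi>(2))
    also have "\<Psi> ((y, t) - (u, \<tau>)) = \<Psi> (y, t) - \<Psi> (u, \<tau>)"
      using linear_on_diff[OF \<Psi>(1) VR, of "(y, t)" "(u, \<tau>)"] yu(1) uV by simp
    finally show "\<Psi> (y, 0) + \<Psi> (0, 1) * t < \<Psi> (u, 0) + \<Psi> (0, 1) * \<tau>"
      unfolding linear_on_Times_UNIV(2)[OF subspace \<Psi>(1) yu(1), of t]
        linear_on_Times_UNIV(2)[OF subspace \<Psi>(1) uV, of \<tau>] by simp
  qed
qed

end

lemma nonpos_if_bounded_above:
  fixes c :: real
  assumes "\<And>t. s \<le> t \<Longrightarrow> a + c * t < b"
  shows "c \<le> 0"
proof (rule ccontr)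
  assume "\<not> c \<le> 0"
  then have c: "0 < c" by simp
  define t where "t = max s ((b - a) / c)"
  have "b - a = c * ((b - a) / c)" using c by simp
  also have "\<dots> \<le> c * t" using c by (intro mult_left_mono) (auto simp: t_def)
  finally have "b \<le> a + c * t" by simp
  moreover have "a + c * t < b" by (rule assms) (simp add: t_def)
  ultimately show False by simp
qed

lemma nonvertical_separation_affine_minorant:
  assumes proper: "\<And>x. x \<in> V \<Longrightarrow> f x \<noteq> -\<infinity>"
    and \<psi>: "linear_on V \<psi>" "continuous_map T euclideanreal \<psi>" and c: "c < 0"
    and sep: "\<And>y t. y \<in> V \<Longrightarrow> f y \<le> ereal t \<Longrightarrow> \<psi> y + c * t < \<psi> x0 + c * \<tau>0"
  obtains \<phi> a where "linear_on V \<phi>" "continuous_map T euclideanreal \<phi>"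
    "\<And>y. y \<in> V \<Longrightarrow> ereal (\<phi> y + a) \<le> f y" "\<phi> x0 + a = \<tau>0"
proof
  let ?\<phi> = "\<lambda>y. (- 1 / c) * \<psi> y"
  show "linear_on V ?\<phi>" by (rule linear_on_cmult[OF \<psi>(1)])
  show "continuous_map T euclideanreal ?\<phi>" by (rule continuous_map_real_mult_left[OF \<psi>(2)])
  show "?\<phi> x0 + (\<tau>0 - ?\<phi> x0) = \<tau>0" by simp
  fix y assume y: "y \<in> V"
  show "ereal (?\<phi> y + (\<tau>0 - ?\<phi> x0)) \<le> f y"
  proof (cases "f y")
    case (real t)
    then have "\<psi> y - \<psi> x0 < (- c) * (t - \<tau>0)" using sep[OF y, of t] by (simp add: algebra_simps)
    then have "(- 1 / c) * (\<psi> y - \<psi> x0) < (- 1 / c) * ((- c) * (t - \<tau>0))"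
      using c by (intro mult_strict_left_mono) auto
    then have "(- 1 / c) * (\<psi> y - \<psi> x0) < t - \<tau>0" using c by simp
    then show ?thesis using real by (simp add: algebra_simps)
  qed (use proper y in auto)
qed

lemma vertical_separation_raises_minorant:
  assumes g: "linear_on V g" "continuous_map T euclideanreal g"
    "\<And>y. y \<in> V \<Longrightarrow> ereal (g y + b) \<le> f y"
    and \<psi>: "linear_on V \<psi>" "continuous_map T euclideanreal \<psi>"
    and \<delta>: "\<delta> > 0" "\<And>y t. y \<in> V \<Longrightarrow> f y \<le> ereal t \<Longrightarrow> \<psi> y \<le> \<psi> x - \<delta>"
  obtains \<phi> a where "linear_on V \<phi>" "continuous_map T euclideanreal \<phi>"
    "\<And>y. y \<in> V \<Longrightarrow> ereal (\<phi> y + a) \<le> f y" "r < \<phi> x + a"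
proof
  define l where "l = max 0 ((r - g x - b) / \<delta> + 1)"
  let ?\<phi> = "\<lambda>y. g y + l * \<psi> y" and ?a = "b + l * (\<delta> - \<psi> x)"
  show "linear_on V ?\<phi>" by (intro linear_on_plus linear_on_cmult g(1) \<psi>(1))
  show "continuous_map T euclideanreal ?\<phi>"
    by (intro continuous_map_add continuous_map_real_mult_left g(2) \<psi>(2))
  fix y assume y: "y \<in> V"
  show "ereal (?\<phi> y + ?a) \<le> f y"
  proof (cases "f y")
    case (real t)
    then have "l * (\<psi> y - \<psi> x + \<delta>) \<le> 0"
      using \<delta>(2)[OF y, of t] real by (intro mult_nonneg_nonpos) (auto simp: l_def)
    then have "ereal (?\<phi> y + ?a) \<le> ereal (g y + b)" by (simp add: algebra_simps)
    then show ?thesis using g(3)[OF y] by (rule order_trans)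
  qed (use g(3)[OF y] in auto)
next
  define l where "l = max 0 ((r - g x - b) / \<delta> + 1)"
  have "r - g x - b + \<delta> = ((r - g x - b) / \<delta> + 1) * \<delta>" using \<delta>(1) by (simp add: field_simps)
  also have "\<dots> \<le> l * \<delta>" using \<delta>(1) by (intro mult_right_mono) (auto simp: l_def)
  finally show "r < g x + l * \<psi> x + (b + l * (\<delta> - \<psi> x))"
    using \<delta>(1) by (simp add: algebra_simps)
qed

context locally_convex_space
begin

lemma lsc_convex_separation:
  assumes f: "ereal_convex_on V f" and lsc: "\<And>c. closedin T {x \<in> V. f x \<le> ereal c}"
    and y0: "y0 \<in> V" "f y0 \<le> ereal t0" and x0: "x0 \<in> V" "ereal s < f x0" and \<tau>0: "\<tau>0 < s"
  obtains \<psi> c where "linear_on V \<psi>" "continuous_map T euclideanreal \<psi>" "c \<le> 0"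
    "\<And>y t. y \<in> V \<Longrightarrow> f y \<le> ereal t \<Longrightarrow> \<psi> y + c * t < \<psi> x0 + c * \<tau>0"
    "c = 0 \<Longrightarrow> \<exists>\<delta>>0. \<forall>y\<in>V. \<forall>t. f y \<le> ereal t \<longrightarrow> \<psi> y \<le> \<psi> x0 - \<delta>"
proof -
  have "openin T (V - {x \<in> V. f x \<le> ereal s})"
    using lsc[of s] topspace by (simp add: closedin_def)
  moreover have "x0 \<in> V - {x \<in> V. f x \<le> ereal s}" using x0 by auto
  ultimately obtain W where W: "openin T W" "x0 \<in> W" "W \<subseteq> V - {x \<in> V. f x \<le> ereal s}" "convex W"
    using convex_nhds by blast
  have "ereal s < f u" if "u \<in> W" for u using W(3) that by auto
  then obtain \<psi> c where \<psi>: "linear_on V \<psi>"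
    and sep: "\<And>y t u \<tau>. y \<in> V \<Longrightarrow> f y \<le> ereal t \<Longrightarrow> u \<in> W \<Longrightarrow> \<tau> < s \<Longrightarrow> \<psi> y + c * t < \<psi> u + c * \<tau>"
    using epigraph_separation_from_open_box[OF f W(1,4) _ _ y0] W(2) by blast
  have c: "c \<le> 0"
  proof (rule nonpos_if_bounded_above[where a = "\<psi> y0" and b = "\<psi> x0 + c * \<tau>0" and s = t0])
    fix t assume "t0 \<le> t"
    then have "f y0 \<le> ereal t" using y0(2) by (simp add: order_trans)
    then show "\<psi> y0 + c * t < \<psi> x0 + c * \<tau>0" by (rule sep[OF y0(1) _ W(2) \<tau>0])
  qed
  have cont: "continuous_map T euclideanreal \<psi>"
    using sep[OF y0 _ \<tau>0]
    by (intro linear_on_continuous_if_bounded_below[OF \<psi> W(1,2), of "\<psi> y0 + c * t0 - c * \<tau>0"])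
      (fastforce simp: algebra_simps)
  show thesis
  proof (rule that[OF \<psi> cont c])
    show "\<psi> y + c * t < \<psi> x0 + c * \<tau>0" if "y \<in> V" "f y \<le> ereal t" for y t
      using sep[OF that W(2) \<tau>0] .
    assume "c = 0"
    text \<open>A point of \<open>W\<close> on the segment from \<open>x0\<close> towards \<open>y0\<close> has a strictly smaller value
      of \<open>\<psi>\<close> than \<open>x0\<close>, and it still bounds \<open>\<psi>\<close> on the domain of \<open>f\<close>.\<close>
    have "y0 - x0 \<in> V" using subspace_diff[OF subspace y0(1) x0(1)] .
    then obtain e where e: "e > 0" "x0 + e *\<^sub>R (y0 - x0) \<in> W"
      by (rule algebraically_openD[OF openin_imp_algebraically_open[OF W(1)] W(2)]) auto
    define u where "u = x0 + e *\<^sub>R (y0 - x0)"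
    have "\<psi> u = \<psi> x0 + e * (\<psi> y0 - \<psi> x0)"
      using linear_on_add[OF \<psi> x0(1) subspace_scale[OF subspace \<open>y0 - x0 \<in> V\<close>]]
        linear_on_scale[OF \<psi> \<open>y0 - x0 \<in> V\<close>] linear_on_diff[OF \<psi> subspace y0(1) x0(1)]
      by (simp add: u_def)
    moreover have "u \<in> W" using e(2) by (simp add: u_def)
    ultimately have "\<psi> y \<le> \<psi> x0 - e * (\<psi> x0 - \<psi> y0)" if "y \<in> V" "f y \<le> ereal t" for y t
      using sep[OF that \<open>u \<in> W\<close> \<tau>0] \<open>c = 0\<close> by (simp add: algebra_simps less_imp_le)
    moreover have "0 < e * (\<psi> x0 - \<psi> y0)" using e(1) sep[OF y0 W(2) \<tau>0] \<open>c = 0\<close> by simp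
    ultimately show "\<exists>\<delta>>0. \<forall>y\<in>V. \<forall>t. f y \<le> ereal t \<longrightarrow> \<psi> y \<le> \<psi> x0 - \<delta>" by blast
  qed
qed

context
  fixes f :: "'v \<Rightarrow> ereal"
  assumes f: "ereal_convex_on V f" and lsc: "\<And>c. closedin T {x \<in> V. f x \<le> ereal c}"
    and proper: "\<And>x. x \<in> V \<Longrightarrow> f x \<noteq> -\<infinity>" "\<exists>x\<in>V. f x \<noteq> \<infinity>"
begin

lemma finite_value_exists:
  obtains y0 t0 where "y0 \<in> V" "f y0 = ereal t0"
proof -
  obtain y0 where y0: "y0 \<in> V" "f y0 \<noteq> \<infinity>" using proper(2) by blast
  with proper(1)[OF y0(1)] that show thesis by (cases "f y0") auto
qed

lemma exists_continuous_affine_minorant: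
  obtains \<phi> a where "linear_on V \<phi>" "continuous_map T euclideanreal \<phi>"
    "\<And>y. y \<in> V \<Longrightarrow> ereal (\<phi> y + a) \<le> f y"
proof -
  obtain y0 t0 where y0: "y0 \<in> V" "f y0 = ereal t0" by (rule finite_value_exists)
  obtain \<psi> c where \<psi>: "linear_on V \<psi>" "continuous_map T euclideanreal \<psi>" "c \<le> 0"
    and sep: "\<And>y t. y \<in> V \<Longrightarrow> f y \<le> ereal t \<Longrightarrow> \<psi> y + c * t < \<psi> y0 + c * (t0 - 2)"
    by (rule lsc_convex_separation[OF f lsc y0(1) _ y0(1), of t0 "t0 - 1" "t0 - 2"])
      (use y0(2) that in auto)
  have "c \<noteq> 0" using sep[OF y0(1)] y0(2) by force
  with \<psi>(3) have "c < 0" by simp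
  from nonvertical_separation_affine_minorant[where f = f, OF proper(1) \<psi>(1,2) this sep] that show thesis
    by blast
qed

theorem continuous_affine_minorant_above:
  assumes x0: "x0 \<in> V" "ereal r < f x0"
  obtains \<phi> a where "linear_on V \<phi>" "continuous_map T euclideanreal \<phi>"
    "\<And>y. y \<in> V \<Longrightarrow> ereal (\<phi> y + a) \<le> f y" "r < \<phi> x0 + a"
proof -
  obtain y0 t0 where y0: "y0 \<in> V" "f y0 = ereal t0" by (rule finite_value_exists)
  obtain s where s: "r < s" "ereal s < f x0"
  proof (cases "f x0")
    case (real v)
    then show thesis using that[of "(r + v) / 2"] x0(2) by simp
  qed (use x0(2) that[of "r + 1"] in auto)
  obtain \<psi> c where \<psi>: "linear_on V \<psi>" "continuous_map T euclideanreal \<psi>" "c \<le> 0"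
    and sep: "\<And>y t. y \<in> V \<Longrightarrow> f y \<le> ereal t \<Longrightarrow> \<psi> y + c * t < \<psi> x0 + c * ((r + s) / 2)"
    and vertical: "c = 0 \<Longrightarrow> \<exists>\<delta>>0. \<forall>y\<in>V. \<forall>t. f y \<le> ereal t \<longrightarrow> \<psi> y \<le> \<psi> x0 - \<delta>"
    by (rule lsc_convex_separation[OF f lsc y0(1) _ x0(1) s(2), of t0 "(r + s) / 2"])
      (use y0(2) s(1) that in auto)
  show thesis
  proof (cases "c = 0")
    case True
    with vertical obtain \<delta> where \<delta>: "\<delta> > 0"
      "\<And>y t. y \<in> V \<Longrightarrow> f y \<le> ereal t \<Longrightarrow> \<psi> y \<le> \<psi> x0 - \<delta>"
      by blast
    obtain \<phi>0 a0 where \<phi>0: "linear_on V \<phi>0" "continuous_map T euclideanreal \<phi>0"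
      "\<And>y. y \<in> V \<Longrightarrow> ereal (\<phi>0 y + a0) \<le> f y"
      using exists_continuous_affine_minorant by blast
    show thesis
      using vertical_separation_raises_minorant[where f = f and g = \<phi>0 and b = a0 and \<psi> = \<psi>
          and \<delta> = \<delta> and x = x0 and r = r] \<phi>0 \<psi>(1,2) \<delta> that
      by blast
  next
    case False
    with \<psi>(3) have "c < 0" by simp
    from nonvertical_separation_affine_minorant[where f = f, OF proper(1) \<psi>(1,2) this sep]
    obtain \<phi> a where \<phi>: "linear_on V \<phi>" "continuous_map T euclideanreal \<phi>"
      "\<And>y. y \<in> V \<Longrightarrow> ereal (\<phi> y + a) \<le> f y" "\<phi> x0 + a = (r + s) / 2"
      by blast
    show thesis using \<phi> s(1) by (intro that[of \<phi> a]) auto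
  qed
qed

end

end

section \<open>Dual representation of the multiplicative acceptability risk measure\<close>

instantiation "fun" :: (type, real_vector) real_vector
begin

definition scaleR_fun :: "real \<Rightarrow> ('a \<Rightarrow> 'b) \<Rightarrow> 'a \<Rightarrow> 'b" where
  "scaleR_fun c f = (\<lambda>x. c *\<^sub>R f x)"

instance by standard (auto simp: scaleR_fun_def fun_eq_iff algebra_simps)

end

lemma lctvs_imp_locally_convex_space:
  fixes V :: "('a \<Rightarrow> real) set"
  assumes "lctvs V T"
  shows "locally_convex_space V T"
proof
  note L = assms[unfolded lctvs_def]
  show top: "topspace T = V" by (rule conjunct1[OF L])
  note L = conjunct2[OF L]
  have zero: "(0 :: 'a \<Rightarrow> real) \<in> V" using conjunct1[OF L] by (simp add: zero_fun_def)
  note L = conjunct2[OF L]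
  have add: "x + y \<in> V" if "x \<in> V" "y \<in> V" for x y
    using conjunct1[OF L] that by (simp add: plus_fun_def)
  note L = conjunct2[OF L]
  have scale: "c *\<^sub>R x \<in> V" if "x \<in> V" for c x
    using conjunct1[OF L] that by (simp add: scaleR_fun_def)
  show "subspace V" using zero add scale by (rule subspaceI)
  note L = conjunct2[OF L]
  show "continuous_map (prod_topology T T) T (\<lambda>(x, y). x + y)"
    using conjunct1[OF L] by (simp add: plus_fun_def split_beta')
  note L = conjunct2[OF L]
  show "continuous_map (prod_topology euclideanreal T) T (\<lambda>(a, x). a *\<^sub>R x)"
    using conjunct1[OF L] by (simp add: scaleR_fun_def split_beta')
  note L = conjunct2[OF conjunct2[OF L]]
  fix x U assume U: "openin T U" "x \<in> U"
  then have "x \<in> V" using openin_subset top by blast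
  from L[rule_format, OF this conjI[OF U]] obtain W where W: "openin T W" "x \<in> W" "W \<subseteq> U"
    and combination: "\<forall>f\<in>W. \<forall>g\<in>W. \<forall>t::real. 0 \<le> t \<and> t \<le> 1 \<longrightarrow> (\<lambda>\<omega>. t * f \<omega> + (1 - t) * g \<omega>) \<in> W"
    by blast
  have "convex W"
  proof (rule convexI)
    fix f g and u v :: real assume "f \<in> W" "g \<in> W" "0 \<le> u" "0 \<le> v" "u + v = 1"
    moreover from this have "v = 1 - u" by simp
    ultimately show "u *\<^sub>R f + v *\<^sub>R g \<in> W"
      using combination by (simp add: scaleR_fun_def plus_fun_def)
  qed
  with W show "\<exists>W. openin T W \<and> x \<in> W \<and> W \<subseteq> U \<and> convex W" by blast
qed

lemma expv_lnv: "(\<And>\<omega>. 0 < X \<omega>) \<Longrightarrow> expv (lnv X) = X"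
  by (simp add: lnv_def expv_def)

lemma eexp_infinity [simp]: "eexp \<infinity> = \<infinity>" and eexp_minus_infinity [simp]: "eexp (- \<infinity>) = 0"
  using eexp.simps(2,3) by simp_all

lemma ereal_le_exp_of_ln_less: "0 < r \<Longrightarrow> ln r < t \<Longrightarrow> ereal r \<le> ereal (exp t)"
  using exp_less_mono[of "ln r" t] by simp

lemma eexp_mono: "x \<le> y \<Longrightarrow> eexp x \<le> eexp y"
  by (cases x; cases y) auto

lemma eexp_nonneg: "0 \<le> eexp x"
  by (cases x) auto

text \<open>Of the hypotheses of the theorem only the following are used: neither the group structure
  of \<open>C\<close>, nor the cone property of \<open>K\<close>, nor \<open>M\<close> being a probability space enters the proof.\<close>

locale marrm_setting =
  fixes M :: "'a measure" and C S K :: "('a \<Rightarrow> real) set" and Tlog :: "('a \<Rightarrow> real) topology"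
    and \<pi> \<rho>t :: "('a \<Rightarrow> real) \<Rightarrow> real"
  assumes C_L0pp: "C \<subseteq> L0pp M" and K_C: "K \<subseteq> C" and S_C: "S \<subseteq> C" and S_nonempty: "S \<noteq> {}"
    and quotient_in_K: "\<And>X Z. X \<in> C \<Longrightarrow> Z \<in> S \<Longrightarrow> (\<lambda>\<omega>. X \<omega> / Z \<omega>) \<in> K"
    and price_pos: "\<And>Z. Z \<in> S \<Longrightarrow> 0 < \<pi> Z"
    and lctvs: "lctvs (lnv ` C) Tlog" and RRM: "RRM M K \<rho>t"
    and proper: "proper_on (lnv ` C)
      (rho_add {Y \<in> lnv ` K. ln (\<rho>t (expv Y)) \<le> 0} (lnv ` S) (\<lambda>L. ln (\<pi> (expv L))))"
    and convex: "convex_on_ereal (lnv ` C)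
      (rho_add {Y \<in> lnv ` K. ln (\<rho>t (expv Y)) \<le> 0} (lnv ` S) (\<lambda>L. ln (\<pi> (expv L))))"
    and lsc: "lsc_on Tlog
      (rho_add {Y \<in> lnv ` K. ln (\<rho>t (expv Y)) \<le> 0} (lnv ` S) (\<lambda>L. ln (\<pi> (expv L))))"
begin

abbreviation rho_log :: "('a \<Rightarrow> real) \<Rightarrow> ereal" where
  "rho_log \<equiv> rho_add {Y \<in> lnv ` K. ln (\<rho>t (expv Y)) \<le> 0} (lnv ` S) (\<lambda>L. ln (\<pi> (expv L)))"

abbreviation dual_set :: "(('a \<Rightarrow> real) \<Rightarrow> real) set" where
  "dual_set \<equiv> {\<phi>. log_linear C \<phi> \<and> continuous_map (tau_of C Tlog) euclideanreal \<phi> \<and>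
                  (\<forall>Y\<in>C \<inter> K. (AE \<omega> in M. 1 \<le> Y \<omega>) \<longrightarrow> 0 \<le> \<phi> Y)}"

abbreviation dual_value :: "(('a \<Rightarrow> real) \<Rightarrow> real) \<Rightarrow> ('a \<Rightarrow> real) \<Rightarrow> ereal" where
  "dual_value \<phi> X \<equiv> eexp (ereal (\<phi> X) - (SUP Y \<in> acc_set K \<rho>t. ereal (\<phi> Y))
                                     - (SUP Z \<in> S. ereal (\<phi> Z - ln (\<pi> Z))))"

lemma C_pos: "X \<in> C \<Longrightarrow> 0 < X \<omega>"
  using C_L0pp by (auto simp: L0pp_def)

lemma acc_set_iff: "Y \<in> acc_set K \<rho>t \<longleftrightarrow> Y \<in> K \<and> \<rho>t Y \<le> 1"
  by (simp add: acc_set_def)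

lemma one_in_acc_set: "(\<lambda>\<omega>. 1) \<in> acc_set K \<rho>t"
proof -
  have "(\<lambda>\<omega>. 1) \<in> Linfpp M" by (auto simp: Linfpp_def L0pp_def)
  then show ?thesis using RRM by (auto simp: RRM_def acc_set_iff)
qed

sublocale lcs: locally_convex_space "lnv ` C" Tlog
  by (rule lctvs_imp_locally_convex_space[OF lctvs])

lemma rho_log_le_ln_price:
  assumes Y: "Y \<in> acc_set K \<rho>t" and Z: "Z \<in> S"
  shows "rho_log (lnv Y + lnv Z) \<le> ereal (ln (\<pi> Z))"
proof -
  have YK: "Y \<in> K" "\<rho>t Y \<le> 1" using Y by (auto simp: acc_set_iff)
  then have "0 < \<rho>t Y" using RRM by (simp add: RRM_def)
  with YK have "ln (\<rho>t (expv (lnv Y))) \<le> 0" using expv_lnv[of Y] C_pos K_C by auto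
  moreover have "(\<lambda>\<omega>. (lnv Y + lnv Z) \<omega> - lnv Z \<omega>) = lnv Y" by (simp add: plus_fun_def)
  ultimately have "rho_log (lnv Y + lnv Z) \<le> ereal (ln (\<pi> (expv (lnv Z))))"
    unfolding rho_add_def using YK(1) Z by (intro Inf_lower) auto
  then show ?thesis using expv_lnv[of Z] C_pos Z S_C by auto
qed

lemma ln_le_rho_log:
  assumes X: "X \<in> C" and r: "0 < r" "ereal r \<le> marrm (acc_set K \<rho>t) S \<pi> X"
  shows "ereal (ln r) \<le> rho_log (lnv X)"
  unfolding rho_add_def
proof (rule Inf_greatest)
  fix e assume "e \<in> {ereal (ln (\<pi> (expv L))) | L. L \<in> lnv ` S \<and>
      (\<lambda>\<omega>. lnv X \<omega> - L \<omega>) \<in> {Y \<in> lnv ` K. ln (\<rho>t (expv Y)) \<le> 0}}"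
  then obtain Z where Z: "Z \<in> S" and e: "e = ereal (ln (\<pi> (expv (lnv Z))))"
    and acc: "(\<lambda>\<omega>. lnv X \<omega> - lnv Z \<omega>) \<in> {Y \<in> lnv ` K. ln (\<rho>t (expv Y)) \<le> 0}"
    by blast
  have "Z \<in> C" using Z S_C by blast
  then have quotient: "expv (\<lambda>\<omega>. lnv X \<omega> - lnv Z \<omega>) = (\<lambda>\<omega>. X \<omega> / Z \<omega>)"
    unfolding expv_def lnv_def using C_pos[OF X] C_pos by (simp add: exp_diff)
  have "(\<lambda>\<omega>. X \<omega> / Z \<omega>) \<in> K" using quotient_in_K X Z by blast
  moreover from this have "0 < \<rho>t (\<lambda>\<omega>. X \<omega> / Z \<omega>)" using RRM by (simp add: RRM_def)
  ultimately have "(\<lambda>\<omega>. X \<omega> / Z \<omega>) \<in> acc_set K \<rho>t"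
    using acc by (simp add: quotient acc_set_iff)
  then have "marrm (acc_set K \<rho>t) S \<pi> X \<le> ereal (\<pi> Z)"
    unfolding marrm_def using Z by (intro Inf_lower) auto
  from order_trans[OF r(2) this] have "r \<le> \<pi> Z" by simp
  then show "ereal (ln r) \<le> e"
    using r(1) expv_lnv[of Z] C_pos \<open>Z \<in> C\<close> by (auto simp: e)
qed

lemma dual_value_le_marrm:
  assumes \<phi>: "\<phi> \<in> dual_set" and X: "X \<in> C"
  shows "dual_value \<phi> X \<le> marrm (acc_set K \<rho>t) S \<pi> X"
  unfolding marrm_def
proof (rule Inf_greatest, safe)
  fix Z assume Z: "Z \<in> S" and acc: "(\<lambda>\<omega>. X \<omega> / Z \<omega>) \<in> acc_set K \<rho>t"
  have ZC: "Z \<in> C" and QC: "(\<lambda>\<omega>. X \<omega> / Z \<omega>) \<in> C" using Z acc S_C K_C by (auto simp: acc_set_iff)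
  have recombine: "(\<lambda>\<omega>. (X \<omega> / Z \<omega>) powr 1 * Z \<omega> powr 1) = X"
  proof
    fix \<omega> show "(X \<omega> / Z \<omega>) powr 1 * Z \<omega> powr 1 = X \<omega>"
      using C_pos[OF X, of \<omega>] C_pos[OF ZC, of \<omega>] by simp
  qed
  have "log_linear C \<phi>" using \<phi> by simp
  from this[unfolded log_linear_def, rule_format, OF QC ZC, of 1 1]
  have split: "\<phi> X = \<phi> (\<lambda>\<omega>. X \<omega> / Z \<omega>) + \<phi> Z" unfolding recombine by simp
  have "ereal (\<phi> (\<lambda>\<omega>. X \<omega> / Z \<omega>)) \<le> (SUP Y \<in> acc_set K \<rho>t. ereal (\<phi> Y))"
    by (rule SUP_upper[OF acc])
  moreover have "ereal (\<phi> Z - ln (\<pi> Z)) \<le> (SUP Z \<in> S. ereal (\<phi> Z - ln (\<pi> Z)))"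
    by (rule SUP_upper[OF Z])
  ultimately have "ereal (\<phi> X) - (SUP Y \<in> acc_set K \<rho>t. ereal (\<phi> Y)) - (SUP Z \<in> S. ereal (\<phi> Z - ln (\<pi> Z)))
      \<le> ereal (\<phi> X) - ereal (\<phi> (\<lambda>\<omega>. X \<omega> / Z \<omega>)) - ereal (\<phi> Z - ln (\<pi> Z))"
    by (intro ereal_minus_mono order_refl)
  also have "\<dots> = ereal (ln (\<pi> Z))" using split by simp
  finally have "dual_value \<phi> X \<le> eexp (ereal (ln (\<pi> Z)))" by (rule eexp_mono)
  then show "dual_value \<phi> X \<le> ereal (\<pi> Z)" using price_pos[OF Z] by simp
qed

lemma log_linear_comp_lnv:
  assumes "linear_on (lnv ` C) \<psi>"
  shows "log_linear C (\<lambda>X. \<psi> (lnv X))"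
  unfolding log_linear_def
proof (intro ballI allI)
  fix X Y and \<alpha> \<beta> :: real assume XY: "X \<in> C" "Y \<in> C"
  have "lnv (\<lambda>\<omega>. X \<omega> powr \<alpha> * Y \<omega> powr \<beta>) = \<alpha> *\<^sub>R lnv X + \<beta> *\<^sub>R lnv Y"
  proof
    fix \<omega>
    have "0 < X \<omega>" "0 < Y \<omega>" using C_pos XY by auto
    then show "lnv (\<lambda>\<omega>. X \<omega> powr \<alpha> * Y \<omega> powr \<beta>) \<omega> = (\<alpha> *\<^sub>R lnv X + \<beta> *\<^sub>R lnv Y) \<omega>"
      by (simp add: lnv_def scaleR_fun_def plus_fun_def ln_mult ln_powr)
  qed
  moreover have "lnv X \<in> lnv ` C" "lnv Y \<in> lnv ` C" using XY by auto
  ultimately show "\<psi> (lnv (\<lambda>\<omega>. X \<omega> powr \<alpha> * Y \<omega> powr \<beta>)) = \<alpha> * \<psi> (lnv X) + \<beta> * \<psi> (lnv Y)"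
    using assms by (simp add: linear_on_add linear_on_scale subspace_scale[OF lcs.subspace])
qed

text \<open>If \<open>\<phi> Y < 0\<close> for some \<open>Y \<ge> 1\<close>, the powers \<open>Y\<^sup>-\<^sup>k\<close> are bounded by \<open>1\<close>, hence acceptable,
  and \<open>\<phi>\<close> is unbounded on them.\<close>

lemma nonneg_if_bounded_on_acc_set:
  assumes \<psi>: "linear_on (lnv ` C) \<psi>" and bound: "\<And>Y. Y \<in> acc_set K \<rho>t \<Longrightarrow> \<psi> (lnv Y) \<le> b"
    and Y: "Y \<in> C \<inter> K" "AE \<omega> in M. 1 \<le> Y \<omega>"
  shows "0 \<le> \<psi> (lnv Y)"
proof (rule ccontr)
  assume "\<not> 0 \<le> \<psi> (lnv Y)"
  then have neg: "\<psi> (lnv Y) < 0" by simp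
  define k where "k = (\<bar>b\<bar> + 1) / (- \<psi> (lnv Y))"
  have k: "0 < k" unfolding k_def using neg by (intro divide_pos_pos) auto
  define W where "W = (\<lambda>\<omega>. Y \<omega> powr (- k))"
  have Ypos: "\<And>\<omega>. 0 < Y \<omega>" using C_pos Y(1) by blast
  have "Y \<in> borel_measurable M" using Y(1) C_L0pp by (auto simp: L0pp_def)
  then have "W \<in> borel_measurable M" unfolding W_def by measurable
  moreover have WAE: "AE \<omega> in M. W \<omega> \<le> 1"
    using Y(2) by eventually_elim
      (use k in \<open>auto simp: W_def powr_minus inverse_le_1_iff intro: ge_one_powr_ge_zero\<close>)
  moreover have "0 < W \<omega>" for \<omega> using Ypos[of \<omega>] by (simp add: W_def)
  ultimately have "W \<in> Linfpp M" unfolding Linfpp_def L0pp_def by blast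
  then have WK: "W \<in> K" using RRM by (auto simp: RRM_def)
  have mono: "\<forall>X\<in>K. \<forall>Y\<in>K. (AE \<omega> in M. X \<omega> \<le> Y \<omega>) \<longrightarrow> \<rho>t X \<le> \<rho>t Y"
    and one: "\<rho>t (\<lambda>\<omega>. 1) = 1" using RRM by (simp_all add: RRM_def)
  have "(\<lambda>\<omega>. 1) \<in> K" using one_in_acc_set by (simp add: acc_set_iff)
  from mono[rule_format, OF WK this] WAE have "\<rho>t W \<le> \<rho>t (\<lambda>\<omega>. 1)" by simp
  then have "W \<in> acc_set K \<rho>t" using WK one by (simp add: acc_set_iff)
  moreover have "lnv W = (- k) *\<^sub>R lnv Y" using Ypos by (simp add: W_def lnv_def scaleR_fun_def ln_powr)
  then have "\<psi> (lnv W) = \<bar>b\<bar> + 1" using linear_on_scale[OF \<psi>] Y(1) neg by (simp add: k_def)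
  ultimately show False using bound[of W] by simp
qed

lemma dual_value_ge_of_affine_minorant:
  assumes \<psi>: "linear_on (lnv ` C) \<psi>"
    and minorant: "\<And>y. y \<in> lnv ` C \<Longrightarrow> ereal (\<psi> y + a) \<le> rho_log y"
  obtains b where "\<And>Y. Y \<in> acc_set K \<rho>t \<Longrightarrow> \<psi> (lnv Y) \<le> b"
    "\<And>X. ereal (exp (\<psi> (lnv X) + a)) \<le> dual_value (\<lambda>Y. \<psi> (lnv Y)) X"
proof -
  have bound: "\<psi> (lnv Y) \<le> - a - (\<psi> (lnv Z) - ln (\<pi> Z))" if "Y \<in> acc_set K \<rho>t" "Z \<in> S" for Y Z
  proof -
    have YZ: "lnv Y \<in> lnv ` C" "lnv Z \<in> lnv ` C" using that K_C S_C by (auto simp: acc_set_iff)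
    have "ereal (\<psi> (lnv Y + lnv Z) + a) \<le> ereal (ln (\<pi> Z))"
      using minorant[OF subspace_add[OF lcs.subspace YZ]] rho_log_le_ln_price[OF that]
      by (rule order_trans)
    then show ?thesis using linear_on_add[OF \<psi> YZ] by simp
  qed
  define SB where "SB = (SUP Y \<in> acc_set K \<rho>t. ereal (\<psi> (lnv Y)))"
  define SS where "SS = (SUP Z \<in> S. ereal (\<psi> (lnv Z) - ln (\<pi> Z)))"
  obtain Z0 where Z0: "Z0 \<in> S" using S_nonempty by blast
  have "\<psi> (lnv (\<lambda>\<omega>. 1)) = 0" using linear_on_zero[OF \<psi> lcs.subspace] by (simp add: lnv_def zero_fun_def)
  then have "0 \<le> SB" unfolding SB_def using SUP_upper[OF one_in_acc_set] by (metis zero_ereal_def)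
  moreover have SB_le: "SB \<le> ereal (- a - (\<psi> (lnv Z) - ln (\<pi> Z)))" if "Z \<in> S" for Z
    unfolding SB_def using bound that by (intro SUP_least) auto
  ultimately obtain sb where sb: "SB = ereal sb" using Z0 by (cases SB) auto
  have "SS \<le> ereal (- a - sb)"
    unfolding SS_def using SB_le sb by (intro SUP_least) (auto simp: algebra_simps)
  moreover have "ereal (\<psi> (lnv Z0) - ln (\<pi> Z0)) \<le> SS" unfolding SS_def using Z0 by (rule SUP_upper)
  ultimately obtain ss where ss: "SS = ereal ss" "ss \<le> - a - sb" by (cases SS) auto
  show thesis
  proof (rule that)
    show "\<psi> (lnv Y) \<le> sb" if "Y \<in> acc_set K \<rho>t" for Y
      using SUP_upper[OF that, of "\<lambda>Y. ereal (\<psi> (lnv Y))"] sb by (simp add: SB_def)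
    fix X
    have "ereal (exp (\<psi> (lnv X) + a)) \<le> eexp (ereal (\<psi> (lnv X)) - SB - SS)"
      using ss sb by simp
    then show "ereal (exp (\<psi> (lnv X) + a)) \<le> dual_value (\<lambda>Y. \<psi> (lnv Y)) X"
      by (simp add: SB_def SS_def)
  qed
qed

lemma dual_set_comp_lnv:
  assumes \<psi>: "linear_on (lnv ` C) \<psi>" "continuous_map Tlog euclideanreal \<psi>"
    and bound: "\<And>Y. Y \<in> acc_set K \<rho>t \<Longrightarrow> \<psi> (lnv Y) \<le> b"
  shows "(\<lambda>Y. \<psi> (lnv Y)) \<in> dual_set"
  using log_linear_comp_lnv[OF \<psi>(1)] continuous_map_pullback[OF \<psi>(2), of C lnv]
    nonneg_if_bounded_on_acc_set[OF \<psi>(1) bound]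
  by (simp add: tau_of_def o_def)

lemma rho_log_ereal_convex: "ereal_convex_on (lnv ` C) rho_log"
  using convex unfolding convex_on_ereal_def ereal_convex_on_def
  by (simp add: scaleR_fun_def plus_fun_def)

lemma rho_log_closed_sublevel: "closedin Tlog {x \<in> lnv ` C. rho_log x \<le> ereal c}"
  using lsc lcs.topspace unfolding lsc_on_def by simp

lemma rho_log_proper: "\<And>x. x \<in> lnv ` C \<Longrightarrow> rho_log x \<noteq> -\<infinity>" "\<exists>x\<in>lnv ` C. rho_log x \<noteq> \<infinity>"
  using proper unfolding proper_on_def by auto

lemma marrm_le_SUP_dual_value:
  assumes X: "X \<in> C"
  shows "marrm (acc_set K \<rho>t) S \<pi> X \<le> (SUP \<phi> \<in> dual_set. dual_value \<phi> X)"
proof (rule dense_le)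
  fix y assume y: "y < marrm (acc_set K \<rho>t) S \<pi> X"
  show "y \<le> (SUP \<phi> \<in> dual_set. dual_value \<phi> X)"
  proof (cases "y \<le> 0")
    case True
    have "0 \<le> dual_value (\<lambda>Y. 0) X" by (rule eexp_nonneg)
    also have "\<dots> \<le> (SUP \<phi> \<in> dual_set. dual_value \<phi> X)" by (rule SUP_upper) (simp add: log_linear_def)
    finally show ?thesis using True by simp
  next
    case False
    obtain z where z: "y < z" "z < marrm (acc_set K \<rho>t) S \<pi> X" using dense[OF y] by blast
    with False obtain r r' where r: "y = ereal r" "z = ereal r'" "0 < r" "r < r'"
      by (cases y; cases z) auto
    have "ereal (ln r) < ereal (ln r')" using r by simp
    also have "\<dots> \<le> rho_log (lnv X)" using ln_le_rho_log[OF X] r z(2) by simp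
    finally have lt: "ereal (ln r) < rho_log (lnv X)" .
    obtain \<psi> a where \<psi>: "linear_on (lnv ` C) \<psi>" "continuous_map Tlog euclideanreal \<psi>"
      and minorant: "\<And>y. y \<in> lnv ` C \<Longrightarrow> ereal (\<psi> y + a) \<le> rho_log y"
      and above: "ln r < \<psi> (lnv X) + a"
      by (rule lcs.continuous_affine_minorant_above[where f = rho_log, OF rho_log_ereal_convex
          rho_log_closed_sublevel rho_log_proper imageI[OF X] lt]) (assumption, rule that)
    obtain b where bound: "\<And>Y. Y \<in> acc_set K \<rho>t \<Longrightarrow> \<psi> (lnv Y) \<le> b"
      and dual_bound: "ereal (exp (\<psi> (lnv X) + a)) \<le> dual_value (\<lambda>Y. \<psi> (lnv Y)) X"
      by (rule dual_value_ge_of_affine_minorant[OF \<psi>(1) minorant]) (assumption | rule that)+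
    have "y \<le> ereal (exp (\<psi> (lnv X) + a))" unfolding r(1) by (rule ereal_le_exp_of_ln_less[OF r(3) above])
    also note dual_bound
    also have "dual_value (\<lambda>Y. \<psi> (lnv Y)) X \<le> (SUP \<phi> \<in> dual_set. dual_value \<phi> X)"
      by (rule SUP_upper[OF dual_set_comp_lnv[OF \<psi> bound]])
    finally show ?thesis .
  qed
qed

end

theorem mainTheorem13:
  fixes M :: "'a measure"
    and C S K :: "('a \<Rightarrow> real) set"
    and Tlog :: "('a \<Rightarrow> real) topology"
    and \<pi> :: "('a \<Rightarrow> real) \<Rightarrow> real"
    and \<rho>t :: "('a \<Rightarrow> real) \<Rightarrow> real"
  assumes "prob_space M"
    and "C \<noteq> {}" "S \<noteq> {}" "K \<noteq> {}"
    and "C \<subseteq> L0pp M" "S \<subseteq> L0pp M" "K \<subseteq> L0pp M"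
    and "\<forall>X\<in>C. \<forall>Z\<in>S. (\<lambda>\<omega>. X \<omega> / Z \<omega>) \<in> K"
    and "\<forall>X\<in>K. \<forall>l::real. l > 0 \<longrightarrow> (\<lambda>\<omega>. l * X \<omega>) \<in> K"
    and "\<forall>X\<in>C. \<forall>Y\<in>C. (\<lambda>\<omega>. X \<omega> * Y \<omega>) \<in> C"
    and "\<forall>X\<in>C. (\<lambda>\<omega>. 1 / X \<omega>) \<in> C"
    and "K \<subseteq> C" "S \<subseteq> C"
    and "\<forall>Z\<in>S. 0 < \<pi> Z"
    and "lctvs (lnv ` C) Tlog"
    and "RRM M K \<rho>t"
    and "proper_on (lnv ` C)
           (rho_add {Y \<in> lnv ` K. ln (\<rho>t (expv Y)) \<le> 0} (lnv ` S) (\<lambda>L. ln (\<pi> (expv L))))"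
    and "convex_on_ereal (lnv ` C)
           (rho_add {Y \<in> lnv ` K. ln (\<rho>t (expv Y)) \<le> 0} (lnv ` S) (\<lambda>L. ln (\<pi> (expv L))))"
    and "lsc_on Tlog
           (rho_add {Y \<in> lnv ` K. ln (\<rho>t (expv Y)) \<le> 0} (lnv ` S) (\<lambda>L. ln (\<pi> (expv L))))"
  shows "\<forall>X\<in>C. marrm (acc_set K \<rho>t) S \<pi> X =
     (SUP \<phi> \<in> {\<phi>. log_linear C \<phi> \<and> continuous_map (tau_of C Tlog) euclideanreal \<phi> \<and>
                  (\<forall>Y\<in>C \<inter> K. (AE \<omega> in M. 1 \<le> Y \<omega>) \<longrightarrow> 0 \<le> \<phi> Y)}.
        eexp (ereal (\<phi> X) - (SUP Y \<in> acc_set K \<rho>t. ereal (\<phi> Y))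
                            - (SUP Z \<in> S. ereal (\<phi> Z - ln (\<pi> Z)))))"
proof -
  interpret marrm_setting M C S K Tlog \<pi> \<rho>t
  proof (rule marrm_setting.intro)
    show "\<And>X Z. X \<in> C \<Longrightarrow> Z \<in> S \<Longrightarrow> (\<lambda>\<omega>. X \<omega> / Z \<omega>) \<in> K" using assms(8) by blast
    show "\<And>Z. Z \<in> S \<Longrightarrow> 0 < \<pi> Z" using assms(14) by blast
  qed (fact assms)+
  show ?thesis
  proof
    fix X assume X: "X \<in> C"
    show "marrm (acc_set K \<rho>t) S \<pi> X = (SUP \<phi> \<in> dual_set. dual_value \<phi> X)"
      by (rule antisym[OF marrm_le_SUP_dual_value[OF X] SUP_least[OF dual_value_le_marrm[OF _ X]]])
  qed
qed

end
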